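(* Consider the linear system $y'(t)=Ay(t)+Bu(t)$, $t\in[0,T]$, $y(0)=y_0$, with mild solution $y(t)=\mathfrak{U}(t)y_0+\int_0^t\mathfrak{U}(t-s)Bu(s)\,ds$, and let $M\subset\mathfrak{X}$ be a fixed finite-dimensional subspace with orthogonal projection $\pi_M$. The following are equivalent: (i) the system is approximately controllable on $[0,T]$; (ii) $\Gamma_0^T$ is positive, i.e. $\langle\Gamma_0^Tx,x\rangle>0$ for all $0\ne x\in\mathfrak{X}$; (iii) $\varepsilon(\varepsilon I+\Gamma_0^T)^{-1}\to0$ as $\varepsilon\to0^+$ in the strong operator topology; (iv) $\varepsilon(\varepsilon(I-\pi_M)+\Gamma_0^T)^{-1}\to0$ as $\varepsilon\to0^+$ in the strong operator topology; (v) the system is finite-approximately controllable on $[0,T]$ (with respect to $M$).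
   Context: $\mathfrak{X}$, $U$ are Hilbert spaces; $A:D(A)\subset\mathfrak{X}\to\mathfrak{X}$ is a densely defined closed operator generating a $C_0$-semigroup $\mathfrak{U}(t)$; $B\in L(U,\mathfrak{X})$; controls $u\in L^2([0,T],U)$. The controllability Gramian is $\Gamma_0^T=\int_0^T\mathfrak{U}(T-s)BB^*\mathfrak{U}^*(T-s)\,ds\in L(\mathfrak{X})$. The system is approximately controllable on $[0,T]$ if for all $y_0,y_f\in\mathfrak{X}$ and $\varepsilon>0$ there is $u\in L^2([0,T],U)$ with $\|y(T)-y_f\|<\varepsilon$. It is finite-approximately controllable on $[0,T]$ (with respect to the finite-dimensional subspace $M$) if for all $y_0,y_f\in\mathfrak{X}$ and $\varepsilon>0$ there is $u\in L^2([0,T],U)$ with $\|y(T)-y_f\|<\varepsilon$ and $\pi_My(T)=\pi_My_f$. *)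

theory Defs
  imports "HOL-Analysis.Analysis"
begin

definition C0_semigroup :: "(real \<Rightarrow> 'x::{real_inner,complete_space} \<Rightarrow>\<^sub>L 'x) \<Rightarrow> bool" where
  "C0_semigroup S \<longleftrightarrow>
     S 0 = id_blinfun \<and>
     (\<forall>t s. 0 \<le> t \<longrightarrow> 0 \<le> s \<longrightarrow> S (t + s) = S t o\<^sub>L S s) \<and>
     (\<forall>x. ((\<lambda>t. blinfun_apply (S t) x) \<longlongrightarrow> x) (at_right 0))"

definition generator :: "(real \<Rightarrow> 'x::{real_inner,complete_space} \<Rightarrow>\<^sub>L 'x) \<Rightarrow> 'x set \<Rightarrow> ('x \<Rightarrow> 'x) \<Rightarrow> bool" where
  "generator S D A \<longleftrightarrow>
     D = {x. \<exists>y. ((\<lambda>h. (1 / h) *\<^sub>R (blinfun_apply (S h) x - x)) \<longlongrightarrow> y) (at_right 0)} \<and>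
     (\<forall>x\<in>D. ((\<lambda>h. (1 / h) *\<^sub>R (blinfun_apply (S h) x - x)) \<longlongrightarrow> A x) (at_right 0))"

definition strongly_measurable_on :: "real set \<Rightarrow> (real \<Rightarrow> 'u::real_normed_vector) \<Rightarrow> bool" where
  "strongly_measurable_on I u \<longleftrightarrow>
     (\<exists>f :: nat \<Rightarrow> real \<Rightarrow> 'u.
        (\<forall>n. finite (range (f n)) \<and> (\<forall>v. f n -` {v} \<inter> I \<in> sets lebesgue)) \<and>
        (AE s in lebesgue_on I. (\<lambda>n. f n s) \<longlonglongrightarrow> u s))"

definition L2_controls :: "real \<Rightarrow> (real \<Rightarrow> 'u::real_normed_vector) set" where
  "L2_controls T = {u. strongly_measurable_on {0..T} u \<and>
                       integrable (lebesgue_on {0..T}) (\<lambda>s. (norm (u s))\<^sup>2)}"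

definition mild_solution ::
  "(real \<Rightarrow> 'x::{real_inner,complete_space} \<Rightarrow>\<^sub>L 'x) \<Rightarrow> ('u::{real_inner,complete_space} \<Rightarrow>\<^sub>L 'x)
     \<Rightarrow> 'x \<Rightarrow> (real \<Rightarrow> 'u) \<Rightarrow> real \<Rightarrow> 'x" where
  "mild_solution S B y0 u t =
     blinfun_apply (S t) y0 + integral {0..t} (\<lambda>s. blinfun_apply (S (t - s)) (blinfun_apply B (u s)))"

definition gramian ::
  "(real \<Rightarrow> 'x::{real_inner,complete_space} \<Rightarrow>\<^sub>L 'x) \<Rightarrow> ('u::{real_inner,complete_space} \<Rightarrow>\<^sub>L 'x)
     \<Rightarrow> real \<Rightarrow> 'x \<Rightarrow> 'x" where
  "gramian S B T x =
     integral {0..T} (\<lambda>s. blinfun_apply (S (T - s))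
        (blinfun_apply B (adjoint (blinfun_apply B) (adjoint (blinfun_apply (S (T - s))) x))))"

definition orth_proj :: "'x::real_inner set \<Rightarrow> 'x \<Rightarrow> 'x" where
  "orth_proj M x = (THE m. m \<in> M \<and> (\<forall>v\<in>M. (x - m) \<bullet> v = 0))"

definition approx_controllable ::
  "(real \<Rightarrow> 'x::{real_inner,complete_space} \<Rightarrow>\<^sub>L 'x) \<Rightarrow> ('u::{real_inner,complete_space} \<Rightarrow>\<^sub>L 'x)
     \<Rightarrow> real \<Rightarrow> bool" where
  "approx_controllable S B T \<longleftrightarrow>
     (\<forall>y0 yf e. e > 0 \<longrightarrow>
        (\<exists>u \<in> L2_controls T. norm (mild_solution S B y0 u T - yf) < e))"

definition finite_approx_controllable ::
  "(real \<Rightarrow> 'x::{real_inner,complete_space} \<Rightarrow>\<^sub>L 'x) \<Rightarrow> ('u::{real_inner,complete_space} \<Rightarrow>\<^sub>L 'x)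
     \<Rightarrow> real \<Rightarrow> 'x set \<Rightarrow> bool" where
  "finite_approx_controllable S B T M \<longleftrightarrow>
     (\<forall>y0 yf e. e > 0 \<longrightarrow>
        (\<exists>u \<in> L2_controls T. norm (mild_solution S B y0 u T - yf) < e \<and>
            orth_proj M (mild_solution S B y0 u T) = orth_proj M yf))"

end

theory Submission
  imports Defs
begin

text \<open>The control \<open>s \<mapsto> B\<^sup>* U(T - s)\<^sup>* x\<close> steers 0 to \<open>\<Gamma> x\<close>, and
  \<open>\<langle>\<Gamma> x, y\<rangle> = \<integral>\<^sub>0\<^sup>T \<langle>B\<^sup>* U(T - s)\<^sup>* x, B\<^sup>* U(T - s)\<^sup>* y\<rangle> ds\<close>,
  so \<open>\<Gamma>\<close> is bounded, symmetric and nonnegative. If \<open>\<langle>\<Gamma> x, x\<rangle> = 0\<close> then every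
  state reachable from 0 is orthogonal to x, so approximate controllability forces positivity.
  For positive \<open>\<Gamma>\<close> the range is dense, and the contractions \<open>\<epsilon> (\<epsilon> I + \<Gamma>)\<^sup>-\<^sup>1\<close>
  tend to 0 on it, hence everywhere; conversely they fix the kernel of \<open>\<Gamma>\<close>.
  As \<open>\<pi>\<^sub>M\<close> has finite rank, \<open>\<epsilon> (\<epsilon> I + \<Gamma>)\<^sup>-\<^sup>1 \<pi>\<^sub>M\<close> is small for small \<open>\<epsilon>\<close>,
  so \<open>\<epsilon> (I - \<pi>\<^sub>M) + \<Gamma>\<close> is a small perturbation of \<open>\<epsilon> I + \<Gamma>\<close>. Finally, for
  \<open>x = (\<epsilon> (I - \<pi>\<^sub>M) + \<Gamma>)\<^sup>-\<^sup>1 (y\<^sub>f - U(T) y\<^sub>0)\<close> the control \<open>B\<^sup>* U(T - \<cdot>)\<^sup>* x\<close>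
  reaches \<open>y\<^sub>f - \<epsilon> (x - \<pi>\<^sub>M x)\<close>, which is close to \<open>y\<^sub>f\<close> and has the same projection
  onto M.

  Strong continuity of the adjoint semigroup, which makes this control continuous, is obtained
  by averaging: the Riesz representers of \<open>y \<mapsto> r\<^sup>-\<^sup>1 \<integral>\<^sub>0\<^sup>r \<langle>z, U(s) y\<rangle> ds\<close> are
  continuity points of \<open>U\<^sup>*\<close> and converge weakly to z.\<close>

section \<open>Projections and adjoints in Hilbert spaces\<close>

lemma norm_diff_parallelogram_midpoint:
  fixes x a b :: "'a::real_inner"
  shows "(norm (a - b))\<^sup>2
    = 2 * (norm (x - a))\<^sup>2 + 2 * (norm (x - b))\<^sup>2 - 4 * (norm (x - (1/2) *\<^sub>R (a + b)))\<^sup>2"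
  unfolding power2_norm_eq_inner
  by (simp add: inner_diff_left inner_diff_right inner_add_left inner_add_right inner_commute
      algebra_simps)

lemma norm_le_if_inner_le:
  fixes d :: "'a::real_inner"
  assumes "\<And>y. \<bar>d \<bullet> y\<bar> \<le> c * norm y" and "c \<ge> 0"
  shows "norm d \<le> c"
proof (cases "d = 0")
  case False
  have "norm d * norm d \<le> c * norm d"
    using assms(1)[of d] by (simp add: power2_norm_eq_inner[symmetric] power2_eq_square)
  then show ?thesis using False by simp
qed (use assms in simp)

lemma minimizing_sequence_Cauchy:
  fixes K :: "'a::real_inner set"
  assumes K: "subspace K" and P: "\<And>n. P n \<in> K" "\<And>n. dist x (P n) < d + 1 / Suc n"
    and d_le: "\<And>k. k \<in> K \<Longrightarrow> d \<le> dist x k" and d0: "0 \<le> d"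
  shows "Cauchy P"
proof -
  have P_close: "(norm (P m - P n))\<^sup>2 \<le> 4 * (1 / Suc N) * (2 * d + 1)"
    if "m \<ge> N" "n \<ge> N" for m n N
  proof -
    have "(1/2) *\<^sub>R (P m + P n) \<in> K"
      using K P(1) by (simp add: subspace_add subspace_scale)
    then have mid: "d\<^sup>2 \<le> (norm (x - (1/2) *\<^sub>R (P m + P n)))\<^sup>2"
      using d_le d0 by (simp add: dist_norm power_mono)
    have near: "(norm (x - P k))\<^sup>2 \<le> (d + 1 / Suc N)\<^sup>2" if "k \<ge> N" for k
    proof -
      have "1 / real (Suc k) \<le> 1 / Suc N" using that by (simp add: divide_simps)
      then show ?thesis using P(2)[of k] by (intro power_mono) (auto simp: dist_norm)
    qed
    have "(norm (P m - P n))\<^sup>2 \<le> 4 * (d + 1 / Suc N)\<^sup>2 - 4 * d\<^sup>2"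
      using norm_diff_parallelogram_midpoint[of "P m" "P n" x] near[OF that(1)] near[OF that(2)] mid
      by linarith
    also have "\<dots> = 4 * (1 / Suc N) * (2 * d + 1 / Suc N)"
      by (simp add: power2_eq_square algebra_simps)
    also have "\<dots> \<le> 4 * (1 / Suc N) * (2 * d + 1)"
      by (intro mult_left_mono add_left_mono) (auto simp: divide_simps)
    finally show ?thesis .
  qed
  show "Cauchy P"
  proof (rule metric_CauchyI)
    fix e :: real assume e: "e > 0"
    obtain N :: nat where N: "4 * (2 * d + 1) / e\<^sup>2 < N" using reals_Archimedean2 by blast
    have "4 * (2 * d + 1) < e\<^sup>2 * N" using N e by (simp add: divide_simps mult.commute)
    also have "\<dots> \<le> e\<^sup>2 * Suc N" using e by simp
    finally have small: "4 * (1 / Suc N) * (2 * d + 1) < e\<^sup>2" by (simp add: divide_simps)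
    have "dist (P m) (P n) < e" if "m \<ge> N" "n \<ge> N" for m n
    proof -
      have "(norm (P m - P n))\<^sup>2 < e\<^sup>2" using P_close[OF that] small by linarith
      then show ?thesis using e power_less_imp_less_base[of "norm (P m - P n)" 2 e]
        by (simp add: dist_norm)
    qed
    then show "\<exists>M. \<forall>m\<ge>M. \<forall>n\<ge>M. dist (P m) (P n) < e" by blast
  qed
qed

lemma closed_subspace_nearest_point:
  fixes K :: "'a::{real_inner,complete_space} set"
  assumes K: "subspace K" "closed K"
  obtains p where "p \<in> K" "\<And>k. k \<in> K \<Longrightarrow> dist x p \<le> dist x k"
proof -
  define d where "d = infdist x K"
  have "K \<noteq> {}" using K(1) subspace_0 by blast
  have d_le: "\<And>k. k \<in> K \<Longrightarrow> d \<le> dist x k" unfolding d_def by (rule infdist_le)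
  have d0: "0 \<le> d" unfolding d_def by (rule infdist_nonneg)
  have "\<exists>k\<in>K. dist x k < d + 1 / Suc n" for n
  proof -
    have "(INF k\<in>K. dist x k) < d + 1 / Suc n"
      using \<open>K \<noteq> {}\<close> by (simp add: d_def infdist_def)
    then show ?thesis
      using \<open>K \<noteq> {}\<close> by (subst (asm) cINF_less_iff) (auto intro: bdd_belowI2[where m=0])
  qed
  then obtain P where P: "\<And>n. P n \<in> K" "\<And>n. dist x (P n) < d + 1 / Suc n"
    by metis
  then obtain p where p: "P \<longlonglongrightarrow> p"
    using minimizing_sequence_Cauchy[OF K(1) P d_le d0] Cauchy_convergent convergent_def by blast
  have "(\<lambda>n. dist x (P n)) \<longlonglongrightarrow> d"
  proof (rule tendsto_sandwich[where f="\<lambda>n. d" and h="\<lambda>n. d + 1 / Suc n"])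
    show "(\<lambda>n. d + 1 / real (Suc n)) \<longlonglongrightarrow> d"
      using tendsto_add[OF tendsto_const LIMSEQ_inverse_real_of_nat[unfolded inverse_eq_divide]]
      by simp
    show "\<forall>\<^sub>F n in sequentially. dist x (P n) \<le> d + 1 / Suc n"
      using P(2) by (intro always_eventually allI less_imp_le) blast
  qed (use d_le P in auto)
  moreover have "(\<lambda>n. dist x (P n)) \<longlonglongrightarrow> dist x p" using p by (intro tendsto_intros)
  ultimately have "dist x p = d" using LIMSEQ_unique by blast
  moreover have "p \<in> K" using K(2) P(1) p closed_sequentially by blast
  ultimately show ?thesis using that d_le by metis
qed

lemma nearest_point_orthogonal:
  fixes K :: "'a::real_inner set"
  assumes "subspace K" "p \<in> K" "\<And>k. k \<in> K \<Longrightarrow> dist x p \<le> dist x k" "v \<in> K"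
  shows "(x - p) \<bullet> v = 0"
proof (cases "v = 0")
  case False
  define c where "c = (x - p) \<bullet> v"
  define t where "t = c / (v \<bullet> v)"
  have vv: "v \<bullet> v > 0" using False by simp
  have "p + t *\<^sub>R v \<in> K" using assms by (simp add: subspace_add subspace_scale)
  then have "(norm (x - p))\<^sup>2 \<le> (norm ((x - p) - t *\<^sub>R v))\<^sup>2"
    using assms(3) by (force simp: dist_norm algebra_simps intro: power_mono)
  also have "\<dots> = (norm (x - p))\<^sup>2 - 2 * t * c + t\<^sup>2 * (v \<bullet> v)"
    unfolding power2_norm_eq_inner c_def
    by (simp add: inner_diff_left inner_diff_right inner_commute power2_eq_square algebra_simps)
  also have "\<dots> = (norm (x - p))\<^sup>2 - c\<^sup>2 / (v \<bullet> v)"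
    using vv unfolding t_def by (simp add: power2_eq_square field_simps)
  finally have "c\<^sup>2 \<le> 0" using vv by (simp add: divide_simps split: if_splits)
  then show ?thesis unfolding c_def by simp
qed simp

lemma orthogonal_projection_exists:
  fixes K :: "'a::{real_inner,complete_space} set"
  assumes "subspace K" "closed K"
  obtains p where "p \<in> K" "\<And>v. v \<in> K \<Longrightarrow> (x - p) \<bullet> v = 0"
  using closed_subspace_nearest_point[OF assms] nearest_point_orthogonal[OF assms(1)] by metis

lemma closed_subspace_eq_UNIV_if_orthogonal_trivial:
  fixes K :: "'a::{real_inner,complete_space} set"
  assumes "subspace K" "closed K" and "\<And>q. (\<And>v. v \<in> K \<Longrightarrow> q \<bullet> v = 0) \<Longrightarrow> q = 0"
  shows "K = UNIV"
proof -
  have "x \<in> K" for x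
  proof -
    obtain p where "p \<in> K" "\<And>v. v \<in> K \<Longrightarrow> (x - p) \<bullet> v = 0"
      using orthogonal_projection_exists[OF assms(1,2)] by blast
    then show ?thesis using assms(3)[of "x - p"] by simp
  qed
  then show ?thesis by blast
qed

lemma riesz_representation:
  fixes \<phi> :: "'a::{real_inner,complete_space} \<Rightarrow> real"
  assumes "bounded_linear \<phi>"
  obtains z where "\<And>y. \<phi> y = z \<bullet> y"
proof -
  interpret bounded_linear \<phi> by fact
  define K where "K = {y. \<phi> y = 0}"
  have "subspace K" unfolding K_def subspace_def by (auto simp: add scaleR zero)
  moreover have "closed K"
    unfolding K_def by (intro closed_Collect_eq continuous_on_const linear_continuous_on assms)
  ultimately show ?thesis
  proof (cases "\<forall>w. \<phi> w = 0")
    case False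
    then obtain w where w: "\<phi> w \<noteq> 0" by blast
    obtain p where p: "p \<in> K" "\<And>v. v \<in> K \<Longrightarrow> (w - p) \<bullet> v = 0"
      using orthogonal_projection_exists[OF \<open>subspace K\<close> \<open>closed K\<close>] by blast
    define q where "q = w - p"
    have \<phi>q: "\<phi> q = \<phi> w" using p(1) unfolding q_def K_def by (simp add: diff)
    have "\<phi> y = ((\<phi> q / (q \<bullet> q)) *\<^sub>R q) \<bullet> y" for y
    proof -
      have "y - (\<phi> y / \<phi> q) *\<^sub>R q \<in> K" unfolding K_def using \<phi>q w by (simp add: diff scaleR)
      then have "q \<bullet> (y - (\<phi> y / \<phi> q) *\<^sub>R q) = 0" using p(2) q_def by blast
      then have "q \<bullet> y = (\<phi> y / \<phi> q) * (q \<bullet> q)" by (simp add: inner_diff_right)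
      moreover have "q \<bullet> q \<noteq> 0" using \<phi>q w zero by auto
      ultimately show ?thesis using \<phi>q w by (simp add: field_simps)
    qed
    then show ?thesis using that by blast
  qed (use that[of 0] in auto)
qed

lemma adjoint_inner:
  fixes f :: "'a::{real_inner,complete_space} \<Rightarrow> 'b::real_inner"
  assumes "bounded_linear f"
  shows "f x \<bullet> y = x \<bullet> adjoint f y"
proof -
  have "\<exists>z. \<forall>x. f x \<bullet> y = z \<bullet> x" for y
    using riesz_representation[OF bounded_linear_inner_left_comp[OF assms]] by metis
  then obtain g where "\<forall>x y. f x \<bullet> y = x \<bullet> g y" by (metis inner_commute)
  then have "\<forall>x y. f x \<bullet> y = x \<bullet> adjoint f y"
    unfolding adjoint_def by (rule someI[where P="\<lambda>f'. \<forall>x y. f x \<bullet> y = x \<bullet> f' y"])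
  then show ?thesis by blast
qed

lemma norm_adjoint_le:
  fixes f :: "'a::{real_inner,complete_space} \<Rightarrow> 'b::real_inner"
  assumes "bounded_linear f" "\<And>x. norm (f x) \<le> K * norm x" "K \<ge> 0"
  shows "norm (adjoint f y) \<le> K * norm y"
proof (rule norm_le_if_inner_le)
  fix x
  have "\<bar>adjoint f y \<bullet> x\<bar> = \<bar>f x \<bullet> y\<bar>" by (metis adjoint_inner[OF assms(1)] inner_commute)
  also have "\<dots> \<le> K * norm x * norm y"
    using Cauchy_Schwarz_ineq2[of "f x" y] assms(2)[of x] by (meson mult_right_mono norm_ge_zero order_trans)
  finally show "\<bar>adjoint f y \<bullet> x\<bar> \<le> K * norm y * norm x" by (simp add: algebra_simps)
qed (use assms in simp)

lemma bounded_linear_adjoint: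
  fixes f :: "'a::{real_inner,complete_space} \<Rightarrow> 'b::real_inner"
  assumes "bounded_linear f"
  shows "bounded_linear (adjoint f)"
proof -
  obtain K where K: "K > 0" "\<And>x. norm (f x) \<le> norm x * K"
    using bounded_linear.pos_bounded[OF assms] by blast
  show ?thesis
  proof (rule bounded_linear_intro[where K=K])
    show "adjoint f (a + b) = adjoint f a + adjoint f b" for a b
      by (rule vector_eq_ldot[THEN iffD1]) (simp add: adjoint_inner[OF assms, symmetric] inner_add_right)
    show "adjoint f (r *\<^sub>R a) = r *\<^sub>R adjoint f a" for r a
      by (rule vector_eq_ldot[THEN iffD1]) (simp add: adjoint_inner[OF assms, symmetric])
    show "norm (adjoint f y) \<le> norm y * K" for y
      using norm_adjoint_le[OF assms, of K] K by (simp add: mult.commute)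
  qed
qed

section \<open>Integrability of continuous Hilbert-space valued functions\<close>

text \<open>The sort \<open>{real_inner,complete_space}\<close> does not entail the class \<open>banach\<close> that the
  integration library requires; a copy of the type is an instance of it and transfers
  integrability of continuous functions back.\<close>

typedef 'a hilbert_copy = "UNIV :: 'a::{real_inner,complete_space} set" by simp
setup_lifting type_definition_hilbert_copy

instantiation hilbert_copy :: ("{real_inner,complete_space}") real_inner
begin
lift_definition zero_hilbert_copy :: "'a hilbert_copy" is 0 .
lift_definition plus_hilbert_copy :: "'a hilbert_copy \<Rightarrow> 'a hilbert_copy \<Rightarrow> 'a hilbert_copy" is "(+)" .
lift_definition minus_hilbert_copy :: "'a hilbert_copy \<Rightarrow> 'a hilbert_copy \<Rightarrow> 'a hilbert_copy" is "(-)" .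
lift_definition uminus_hilbert_copy :: "'a hilbert_copy \<Rightarrow> 'a hilbert_copy" is uminus .
lift_definition scaleR_hilbert_copy :: "real \<Rightarrow> 'a hilbert_copy \<Rightarrow> 'a hilbert_copy" is scaleR .
lift_definition norm_hilbert_copy :: "'a hilbert_copy \<Rightarrow> real" is norm .
lift_definition sgn_hilbert_copy :: "'a hilbert_copy \<Rightarrow> 'a hilbert_copy" is sgn .
lift_definition dist_hilbert_copy :: "'a hilbert_copy \<Rightarrow> 'a hilbert_copy \<Rightarrow> real" is dist .
lift_definition inner_hilbert_copy :: "'a hilbert_copy \<Rightarrow> 'a hilbert_copy \<Rightarrow> real" is inner .
definition uniformity_hilbert_copy :: "('a hilbert_copy \<times> 'a hilbert_copy) filter" where
  "uniformity_hilbert_copy = (INF e\<in>{0<..}. principal {(x, y). dist x y < e})"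
definition open_hilbert_copy :: "'a hilbert_copy set \<Rightarrow> bool" where
  "open_hilbert_copy U = (\<forall>x\<in>U. \<forall>\<^sub>F (x', y) in uniformity. x' = x \<longrightarrow> y \<in> U)"
instance
proof
  show "(uniformity :: ('a hilbert_copy \<times> 'a hilbert_copy) filter)
      = (INF e\<in>{0<..}. principal {(x, y). dist x y < e})"
    by (simp add: uniformity_hilbert_copy_def)
  show "open U = (\<forall>x\<in>U. \<forall>\<^sub>F (x', y) in uniformity. x' = x \<longrightarrow> y \<in> U)"
    for U :: "'a hilbert_copy set"
    by (simp add: open_hilbert_copy_def)
qed (transfer; auto simp: algebra_simps dist_norm sgn_div_norm inner_add_left norm_triangle_ineq
       inner_commute norm_eq_sqrt_inner)+
end

lemma dist_Abs_hilbert_copy: "dist (Abs_hilbert_copy x) (Abs_hilbert_copy y) = dist x y"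
  by (simp add: dist_hilbert_copy.abs_eq eq_onp_same_args)

instance hilbert_copy :: ("{real_inner,complete_space}") banach
proof
  fix X :: "nat \<Rightarrow> 'a hilbert_copy" assume "Cauchy X"
  then have "Cauchy (\<lambda>n. Rep_hilbert_copy (X n))"
    unfolding Cauchy_def by (metis Rep_hilbert_copy_inverse dist_Abs_hilbert_copy)
  then obtain l where "(\<lambda>n. Rep_hilbert_copy (X n)) \<longlonglongrightarrow> l"
    using Cauchy_convergent convergent_def by blast
  then have "X \<longlonglongrightarrow> Abs_hilbert_copy l"
    unfolding LIMSEQ_iff_nz by (metis Rep_hilbert_copy_inverse dist_Abs_hilbert_copy)
  then show "convergent X" unfolding convergent_def by blast
qed

lemma integrable_continuous_hilbert:
  fixes f :: "real \<Rightarrow> 'x::{real_inner,complete_space}"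
  assumes "continuous_on {a..b} f"
  shows "f integrable_on {a..b}"
proof -
  have "bounded_linear Rep_hilbert_copy"
    by (rule bounded_linear_intro[where K=1]; transfer; simp)
  moreover have "continuous_on {a..b} (\<lambda>s. Abs_hilbert_copy (f s))"
    using assms unfolding continuous_on_iff by (simp add: dist_Abs_hilbert_copy)
  then have "(\<lambda>s. Abs_hilbert_copy (f s)) integrable_on {a..b}"
    by (rule integrable_continuous_interval)
  ultimately show ?thesis
    using integrable_linear by (fastforce simp: o_def Abs_hilbert_copy_inverse)
qed

section \<open>Strongly continuous semigroups and their adjoints\<close>

lemma uniform_boundedness:
  fixes F :: "'i \<Rightarrow> 'a::{real_normed_vector,complete_space} \<Rightarrow> 'b::real_normed_vector"
  assumes bl: "\<And>i. bounded_linear (F i)"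
    and pointwise: "\<And>x. \<exists>c. \<forall>i. norm (F i x) \<le> c"
  obtains C where "\<And>i x. norm (F i x) \<le> C * norm x"
proof -
  define E where "E n = (\<Inter>i. {x. norm (F i x) \<le> real n})" for n :: nat
  have "closed (E n)" for n
    unfolding E_def
    by (intro closed_INT ballI closed_Collect_le continuous_on_norm continuous_on_const
        linear_continuous_on bl)
  moreover have "(\<Union>n. E n) = UNIV"
  proof -
    have "x \<in> (\<Union>n. E n)" for x
    proof -
      obtain c where c: "\<forall>i. norm (F i x) \<le> c" using pointwise by blast
      obtain n :: nat where "c \<le> n" using real_arch_simple by blast
      then show ?thesis using c unfolding E_def by (auto intro: order_trans)
    qed
    then show ?thesis by blast
  qed
  ultimately have "\<exists>n. interior (E n) \<noteq> {}"
    using Met_TC.metric_Baire_category_alt[of "range E"] by (force simp: complete_UNIV)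
  then obtain n x0 r where r: "r > 0" "ball x0 r \<subseteq> E n"
    by (meson ex_in_conv open_contains_ball_eq open_interior interior_subset subset_trans)
  have small: "norm (F i y) \<le> 2 * real n" if "norm y < r" for i y
  proof -
    have "x0 + y \<in> E n" "x0 \<in> E n" using r that by (auto simp: dist_norm)
    then have "norm (F i (x0 + y)) \<le> n" "norm (F i x0) \<le> n" unfolding E_def by auto
    moreover have "F i y = F i (x0 + y) - F i x0"
      using linear_add[OF bounded_linear.linear[OF bl]] by simp
    ultimately show ?thesis using norm_triangle_ineq4[of "F i (x0 + y)" "F i x0"] by simp
  qed
  have "norm (F i x) \<le> (4 * real n / r) * norm x" for i x
  proof (cases "x = 0")
    case False
    define y where "y = (r / (2 * norm x)) *\<^sub>R x"
    have "norm y < r" using False r by (simp add: y_def)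
    moreover have "norm (F i y) = (r / (2 * norm x)) * norm (F i x)"
      using linear_scale[OF bounded_linear.linear[OF bl]] r by (simp add: y_def)
    ultimately have "(r / (2 * norm x)) * norm (F i x) \<le> 2 * real n" using small[of y i] by linarith
    then show ?thesis using False r by (simp add: field_simps)
  qed (simp add: linear_0[OF bounded_linear.linear[OF bl]])
  then show ?thesis using that by blast
qed

lemma semigroup_continuous_on:
  fixes R :: "real \<Rightarrow> 'a::real_normed_vector \<Rightarrow> 'a"
  assumes comp: "\<And>t s x. 0 \<le> t \<Longrightarrow> 0 \<le> s \<Longrightarrow> R (t + s) x = R t (R s x)"
    and lin: "\<And>t. t \<in> {0..L} \<Longrightarrow> linear (R t)"
    and bd: "\<And>t x. t \<in> {0..L} \<Longrightarrow> norm (R t x) \<le> C * norm x"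
    and rc: "((\<lambda>h. R h x) \<longlongrightarrow> x) (at_right 0)"
    and C: "C > 0"
  shows "continuous_on {0..L} (\<lambda>t. R t x)"
  unfolding continuous_on_iff
proof (intro ballI allI impI)
  fix t0 e :: real assume t0: "t0 \<in> {0..L}" and e: "e > 0"
  have "\<forall>\<^sub>F h in at_right 0. dist (R h x) x < e / C"
    using rc by (rule tendstoD) (simp add: e C)
  then obtain b where b: "b > 0" "\<And>h. 0 < h \<Longrightarrow> h < b \<Longrightarrow> dist (R h x) x < e / C"
    unfolding eventually_at_right_field by auto
  have step: "dist (R (s + h) x) (R s x) < e" if s: "s \<in> {0..L}" and h: "0 < h" "h < b" for s h
  proof -
    have "R (s + h) x - R s x = R s (R h x - x)"
      using comp[of s h x] s h linear_diff[OF lin[OF s]] by simp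
    then have "norm (R (s + h) x - R s x) \<le> C * norm (R h x - x)" using bd[OF s] by simp
    also have "\<dots> < C * (e / C)"
      using b(2)[OF h] C by (intro mult_strict_left_mono) (auto simp: dist_norm)
    finally show ?thesis using C by (simp add: dist_norm)
  qed
  show "\<exists>d>0. \<forall>t\<in>{0..L}. dist t t0 < d \<longrightarrow> dist (R t x) (R t0 x) < e"
  proof (intro exI[of _ b] conjI ballI impI)
    fix t assume t: "t \<in> {0..L}" and dt: "dist t t0 < b"
    consider "t = t0" | "t0 < t" | "t < t0" by linarith
    then show "dist (R t x) (R t0 x) < e"
    proof cases
      case 2 then show ?thesis using step[OF t0, of "t - t0"] dt by (simp add: dist_real_def)
    next
      case 3 then show ?thesis
        using step[OF t, of "t0 - t"] dt by (simp add: dist_real_def dist_commute)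
    qed (use e in simp)
  qed (fact b(1))
qed

lemma continuous_on_apply_bounded_family:
  fixes R :: "real \<Rightarrow> 'a::real_normed_vector \<Rightarrow> 'b::real_normed_vector"
  assumes cont: "\<And>x. continuous_on I (\<lambda>t. R t x)"
    and lin: "\<And>t. t \<in> I \<Longrightarrow> linear (R t)"
    and bd: "\<And>t x. t \<in> I \<Longrightarrow> norm (R t x) \<le> C * norm x"
    and C: "C > 0"
    and v: "continuous_on I v"
  shows "continuous_on I (\<lambda>t. R t (v t))"
  unfolding continuous_on_iff
proof (intro ballI allI impI)
  fix t0 e :: real assume t0: "t0 \<in> I" and e: "e > 0"
  obtain d1 where d1: "d1 > 0" "\<And>t. t \<in> I \<Longrightarrow> dist t t0 < d1 \<Longrightarrow> dist (v t) (v t0) < e / 2 / C"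
    using v t0 e C unfolding continuous_on_iff by (metis half_gt_zero divide_pos_pos)
  obtain d2 where d2: "d2 > 0"
    "\<And>t. t \<in> I \<Longrightarrow> dist t t0 < d2 \<Longrightarrow> dist (R t (v t0)) (R t0 (v t0)) < e / 2"
    using cont[of "v t0"] t0 e unfolding continuous_on_iff by (metis half_gt_zero)
  show "\<exists>d>0. \<forall>t\<in>I. dist t t0 < d \<longrightarrow> dist (R t (v t)) (R t0 (v t0)) < e"
  proof (intro exI[of _ "min d1 d2"] conjI ballI impI)
    fix t assume t: "t \<in> I" and dt: "dist t t0 < min d1 d2"
    have "R t (v t) - R t0 (v t0) = R t (v t - v t0) + (R t (v t0) - R t0 (v t0))"
      using linear_diff[OF lin[OF t]] by simp
    then have "norm (R t (v t) - R t0 (v t0))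
        \<le> norm (R t (v t - v t0)) + norm (R t (v t0) - R t0 (v t0))"
      by (metis norm_triangle_ineq)
    also have "\<dots> < C * (e / 2 / C) + e / 2"
    proof (rule add_le_less_mono)
      have "norm (R t (v t - v t0)) \<le> C * norm (v t - v t0)" using bd[OF t] .
      also have "\<dots> \<le> C * (e / 2 / C)"
        using d1(2)[OF t] dt C by (intro mult_left_mono) (auto simp: dist_norm)
      finally show "norm (R t (v t - v t0)) \<le> C * (e / 2 / C)" .
      show "norm (R t (v t0) - R t0 (v t0)) < e / 2" using d2(2)[OF t] dt by (simp add: dist_norm)
    qed
    also have "\<dots> = e" using C by simp
    finally show "dist (R t (v t)) (R t0 (v t0)) < e" by (simp add: dist_norm)
  qed (use d1 d2 in simp)
qed

lemma closed_subspace_right_continuity_points: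
  fixes R :: "real \<Rightarrow> 'a::real_normed_vector \<Rightarrow> 'a"
  assumes lin: "\<And>h. linear (R h)"
    and bd: "\<And>h x. h \<in> {0..d} \<Longrightarrow> norm (R h x) \<le> C * norm x" and "d > 0" "C \<ge> 0"
  defines "X \<equiv> {w. ((\<lambda>h. R h w) \<longlongrightarrow> w) (at_right 0)}"
  shows "subspace X" and "closed X"
proof -
  show "subspace X"
    unfolding subspace_def X_def
    by (auto simp: linear_add[OF lin] linear_scale[OF lin] linear_0[OF lin]
        intro!: tendsto_add tendsto_scaleR tendsto_const)
  have "w \<in> X" if w: "w \<in> closure X" for w
  proof -
    have "\<forall>\<^sub>F h in at_right 0. dist (R h w) w < e" if e: "e > 0" for e
    proof -
      define \<delta> where "\<delta> = e / (3 * (C + 1))"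
      have \<delta>: "\<delta> > 0" "(C + 1) * \<delta> = e / 3" using e \<open>C \<ge> 0\<close> by (simp_all add: \<delta>_def field_simps)
      obtain w' where w': "w' \<in> X" "dist w' w < \<delta>" using w \<delta> closure_approachable by blast
      have "\<forall>\<^sub>F h in at_right 0. dist (R h w') w' < e / 3"
        using w'(1) e unfolding X_def by (intro tendstoD) auto
      moreover have "\<forall>\<^sub>F h in at_right (0::real). h \<in> {0..d}"
        unfolding eventually_at_right_field using \<open>d > 0\<close> by (intro exI[of _ d]) auto
      ultimately show ?thesis
      proof eventually_elim
        case (elim h)
        have "R h w - w = R h (w - w') + (R h w' - w') + (w' - w)" using linear_diff[OF lin] by simp
        then have "norm (R h w - w) \<le> norm (R h (w - w')) + norm (R h w' - w') + norm (w' - w)"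
          by (metis add_right_mono norm_triangle_ineq order_trans)
        also have "\<dots> < C * \<delta> + e / 3 + \<delta>"
        proof -
          have "norm (R h (w - w')) \<le> C * norm (w - w')" using bd elim(2) by blast
          also have "\<dots> \<le> C * \<delta>"
            using w'(2) \<open>C \<ge> 0\<close> by (intro mult_left_mono) (auto simp: dist_norm norm_minus_commute)
          finally show ?thesis using elim(1) w'(2) by (simp add: dist_norm)
        qed
        also have "\<dots> = 2 * e / 3" using \<delta> by (simp add: algebra_simps)
        finally show ?case using e by (simp add: dist_norm)
      qed
    qed
    then show ?thesis unfolding X_def by (simp add: tendsto_iff)
  qed
  then show "closed X" using closure_subset_eq by blast
qed

lemma mem_closed_subspace_of_weak_limit:
  fixes K :: "'a::{real_inner,complete_space} set"
  assumes "subspace K" "closed K" "F \<noteq> bot"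
    and "\<forall>\<^sub>F r in F. Z r \<in> K" and "\<And>q. ((\<lambda>r. Z r \<bullet> q) \<longlongrightarrow> z \<bullet> q) F"
  shows "z \<in> K"
proof -
  obtain p where p: "p \<in> K" "\<And>v. v \<in> K \<Longrightarrow> (z - p) \<bullet> v = 0"
    using orthogonal_projection_exists[OF assms(1,2)] by blast
  have "\<forall>\<^sub>F r in F. Z r \<bullet> (z - p) = 0"
    using assms(4) by eventually_elim (use p in \<open>simp add: inner_commute\<close>)
  then have "((\<lambda>r. Z r \<bullet> (z - p)) \<longlongrightarrow> 0) F" by (rule tendsto_eventually)
  then have "z \<bullet> (z - p) = 0" using assms(3,5) tendsto_unique by blast
  moreover have "p \<bullet> (z - p) = 0" using p by (simp add: inner_commute)
  ultimately have "(z - p) \<bullet> (z - p) = 0" by (simp add: inner_diff_left)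
  then show ?thesis using p(1) by simp
qed

lemma average_tendsto_at_right:
  fixes f :: "real \<Rightarrow> real"
  assumes "continuous_on {0..a} f" "a > 0"
  shows "((\<lambda>r. integral {0..r} f / r) \<longlongrightarrow> f 0) (at_right 0)"
proof -
  have "((\<lambda>r. integral {0..r} f) has_real_derivative f 0) (at 0 within {0..a})"
    using assms by (intro integral_has_real_derivative) auto
  then show ?thesis
    using assms(2) by (simp add: has_field_derivative_iff at_within_Icc_at_right)
qed

locale hilbert_C0_semigroup =
  fixes S :: "real \<Rightarrow> 'x::{real_inner,complete_space} \<Rightarrow>\<^sub>L 'x"
  assumes C0: "C0_semigroup S"
begin

lemma S_0: "S 0 x = x"
  using C0 unfolding C0_semigroup_def by simp

lemma S_add: "0 \<le> t \<Longrightarrow> 0 \<le> s \<Longrightarrow> S (t + s) x = S t (S s x)"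
  using C0 unfolding C0_semigroup_def by simp

lemma S_right_continuous: "((\<lambda>t. S t x) \<longlongrightarrow> x) (at_right 0)"
  using C0 unfolding C0_semigroup_def by simp

lemma norm_S_apply_le: "norm (S t) \<le> C \<Longrightarrow> norm (S t x) \<le> C * norm x"
  by (meson norm_blinfun mult_right_mono norm_ge_zero order_trans)

lemma bounded_near_0: "\<exists>d C. d > 0 \<and> (\<forall>t\<in>{0..d}. norm (S t) \<le> C)"
proof (rule ccontr)
  assume "\<not> ?thesis"
  then have "\<forall>n::nat. \<exists>t\<in>{0..1/Suc n}. norm (S t) > real n"
    by (metis not_le of_nat_0_less_iff zero_less_Suc zero_less_divide_1_iff)
  then obtain t where t: "\<And>n. t n \<in> {0..1/Suc n}" "\<And>n. norm (S (t n)) > real n" by metis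
  have "t \<longlonglongrightarrow> 0"
    by (rule tendsto_sandwich[OF _ _ tendsto_const LIMSEQ_inverse_real_of_nat[unfolded inverse_eq_divide]])
       (use t(1) in \<open>auto simp: of_nat_Suc[symmetric] simp del: of_nat_Suc\<close>)
  have "\<exists>c. \<forall>n. norm (S (t n) x) \<le> c" for x
  proof -
    have "continuous (at 0 within {0..1}) (\<lambda>t. S t x)"
      by (simp add: continuous_within at_within_Icc_at_right S_0 S_right_continuous)
    moreover have "t n \<in> {0..1}" for n
      using t(1)[of n] order_trans[of "t n" "1 / Suc n" 1] by (auto simp: divide_simps)
    ultimately have "(\<lambda>n. S (t n) x) \<longlonglongrightarrow> x"
      using \<open>t \<longlonglongrightarrow> 0\<close> by (auto simp: continuous_within_sequentially o_def S_0)
    then show ?thesis by (metis BseqD convergentI convergent_imp_Bseq)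
  qed
  then obtain C where C: "\<And>n x. norm (S (t n) x) \<le> C * norm x"
    using uniform_boundedness[of "\<lambda>n. blinfun_apply (S (t n))"] blinfun.bounded_linear_right by metis
  have "norm (S (t n)) \<le> max C 0" for n
    using C by (intro norm_blinfun_bound)
      (auto intro: order_trans[OF _ mult_right_mono[OF max.cobounded1 norm_ge_zero]])
  moreover obtain n :: nat where "max C 0 < n" using reals_Archimedean2 by blast
  ultimately show False using t(2)[of n] by (meson less_le_not_le order_less_trans)
qed

lemma bounded_on_interval: obtains C where "C \<ge> 1" "\<And>t. t \<in> {0..L} \<Longrightarrow> norm (S t) \<le> C"
proof -
  obtain d C0 where d: "d > 0" "\<And>t. t \<in> {0..d} \<Longrightarrow> norm (S t) \<le> C0"
    using bounded_near_0 by blast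
  define C1 where "C1 = max 1 C0"
  have C1: "C1 \<ge> 1" "\<And>t. t \<in> {0..d} \<Longrightarrow> norm (S t) \<le> C1" using d unfolding C1_def by force+
  obtain N :: nat where N: "max 1 (L / d) < N" using reals_Archimedean2 by blast
  have pow: "norm (S (real k * a)) \<le> C1 ^ k" if a: "a \<in> {0..d}" for a k
  proof (induction k)
    case 0
    have "S 0 = id_blinfun" by (rule blinfun_eqI) (simp add: S_0)
    then show ?case using norm_blinfun_id_le by simp
  next
    case (Suc k)
    have "S (real (Suc k) * a) = S (real k * a) o\<^sub>L S a"
      using S_add[of "real k * a" a] a by (intro blinfun_eqI) (simp add: algebra_simps)
    then have "norm (S (real (Suc k) * a)) \<le> norm (S (real k * a)) * norm (S a)"
      by (simp add: norm_blinfun_compose)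
    also have "\<dots> \<le> C1 ^ k * C1" using Suc C1 a by (intro mult_mono) auto
    finally show ?case by (simp add: mult.commute)
  qed
  have "norm (S t) \<le> C1 ^ N" if t: "t \<in> {0..L}" for t
  proof -
    have "t / N \<in> {0..d}"
      using t N d by (auto simp: field_simps)
    from pow[OF this, of N] show ?thesis using N by simp
  qed
  then show ?thesis using that[of "C1 ^ N"] C1(1) by (simp add: one_le_power)
qed

lemma continuous_on_orbit: "continuous_on {0..L} (\<lambda>t. S t x)"
proof -
  obtain C where C: "C \<ge> 1" "\<And>t. t \<in> {0..L} \<Longrightarrow> norm (S t) \<le> C"
    using bounded_on_interval by blast
  show ?thesis
    by (rule semigroup_continuous_on[where C=C])
       (use C in \<open>auto simp: S_add S_right_continuous norm_S_apply_le
         blinfun.bounded_linear_right bounded_linear.linear\<close>)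
qed

definition S_adj :: "real \<Rightarrow> 'x \<Rightarrow> 'x" where "S_adj t = adjoint (blinfun_apply (S t))"

lemma S_adj_inner: "S t y \<bullet> z = y \<bullet> S_adj t z"
  unfolding S_adj_def by (rule adjoint_inner[OF blinfun.bounded_linear_right])

lemma bounded_linear_S_adj: "bounded_linear (S_adj t)"
  unfolding S_adj_def by (rule bounded_linear_adjoint[OF blinfun.bounded_linear_right])

lemma norm_S_adj_le: "norm (S t) \<le> C \<Longrightarrow> norm (S_adj t z) \<le> C * norm z"
  unfolding S_adj_def
  by (rule norm_adjoint_le[OF blinfun.bounded_linear_right])
     (auto intro: norm_S_apply_le order_trans[OF norm_ge_zero])

lemma S_adj_add: "0 \<le> t \<Longrightarrow> 0 \<le> s \<Longrightarrow> S_adj (t + s) z = S_adj t (S_adj s z)"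
  by (rule vector_eq_ldot[THEN iffD1])
     (simp add: S_adj_inner[symmetric] add.commute[of t] S_add)

end

context hilbert_C0_semigroup
begin

lemma continuous_on_orbit_functional: "continuous_on {0..L} (\<lambda>s. z \<bullet> S s y)"
  by (intro continuous_on_inner continuous_on_const continuous_on_orbit)

lemma integrable_orbit_functional: "0 \<le> a \<Longrightarrow> (\<lambda>s. z \<bullet> S s y) integrable_on {a..b}"
  by (rule integrable_continuous_interval, rule continuous_on_subset[OF continuous_on_orbit_functional])
     auto

lemma integral_orbit_functional_bound:
  assumes "0 \<le> a" "a \<le> b" "\<And>t. t \<in> {0..b} \<Longrightarrow> norm (S t) \<le> C"
  shows "\<bar>integral {a..b} (\<lambda>s. z \<bullet> S s y)\<bar> \<le> C * norm z * norm y * (b - a)"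
proof -
  have "\<bar>z \<bullet> S s y\<bar> \<le> C * norm z * norm y" if "s \<in> {a..b}" for s
  proof -
    have "\<bar>z \<bullet> S s y\<bar> \<le> norm z * norm (S s y)" by (rule Cauchy_Schwarz_ineq2)
    also have "\<dots> \<le> norm z * (C * norm y)"
      using that assms by (intro mult_left_mono norm_S_apply_le) auto
    finally show ?thesis by (simp add: algebra_simps)
  qed
  moreover have "continuous_on {a..b} (\<lambda>s. z \<bullet> S s y)"
    using assms(1) by (intro continuous_on_subset[OF continuous_on_orbit_functional]) auto
  ultimately show ?thesis using integral_bound[OF assms(2)] by (metis real_norm_def)
qed

lemma averaged_orbit_representer:
  assumes "r > 0"
  obtains Z where "\<And>y. integral {0..r} (\<lambda>s. z \<bullet> S s y) / r = Z \<bullet> y"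
proof -
  obtain C where C: "C \<ge> 1" "\<And>t. t \<in> {0..r} \<Longrightarrow> norm (S t) \<le> C"
    using bounded_on_interval by blast
  have "bounded_linear (\<lambda>y. integral {0..r} (\<lambda>s. z \<bullet> S s y) / r)"
  proof (rule bounded_linear_intro[where K="C * norm z"])
    show "integral {0..r} (\<lambda>s. z \<bullet> S s (a + b)) / r
        = integral {0..r} (\<lambda>s. z \<bullet> S s a) / r + integral {0..r} (\<lambda>s. z \<bullet> S s b) / r" for a b
      unfolding blinfun.add_right inner_add_right add_divide_distrib[symmetric]
      by (simp add: integral_add integrable_orbit_functional)
    show "integral {0..r} (\<lambda>s. z \<bullet> S s (c *\<^sub>R a)) / r
        = c *\<^sub>R (integral {0..r} (\<lambda>s. z \<bullet> S s a) / r)" for c a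
      by (simp add: blinfun.scaleR_right)
    show "norm (integral {0..r} (\<lambda>s. z \<bullet> S s y) / r) \<le> norm y * (C * norm z)" for y
      using integral_orbit_functional_bound[of 0 r C z y] C assms
      by (simp add: divide_simps algebra_simps)
  qed
  then show ?thesis using riesz_representation that by blast
qed

lemma S_adj_averaged_representer_right_continuous:
  assumes r: "r > 0" and Z: "\<And>y. integral {0..r} (\<lambda>s. z \<bullet> S s y) / r = Z \<bullet> y"
  shows "((\<lambda>h. S_adj h Z) \<longlongrightarrow> Z) (at_right 0)"
proof -
  define \<phi> where "\<phi> y s = z \<bullet> S s y" for y s
  obtain C where C: "C \<ge> 1" "\<And>t. t \<in> {0..r + 1} \<Longrightarrow> norm (S t) \<le> C"
    using bounded_on_interval by blast
  have bound: "norm (S_adj h Z - Z) \<le> 2 * C * norm z / r * h" if h: "h \<in> {0<..1}" for h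
  proof (rule norm_le_if_inner_le)
    fix y
    text \<open>Shifting the averaging window by h changes the average only at its two ends.\<close>
    have "S_adj h Z \<bullet> y = Z \<bullet> S h y" by (metis S_adj_inner inner_commute)
    also have "\<dots> = integral {0..r} (\<lambda>s. \<phi> y (s + h)) / r"
      unfolding Z[symmetric] \<phi>_def using h by (intro arg_cong2[where f="(/)"] integral_cong) (auto simp: S_add)
    also have "integral {0..r} (\<lambda>s. \<phi> y (s + h)) = integral {h..r+h} (\<phi> y)"
      using integral_shift_Icc_real[of 0 r "\<phi> y" h] by (simp add: add.commute o_def)
    finally have "(S_adj h Z - Z) \<bullet> y = (integral {h..r+h} (\<phi> y) - integral {0..r} (\<phi> y)) / r"
      by (simp add: inner_diff_left diff_divide_distrib Z[symmetric] \<phi>_def[abs_def])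
    also have "integral {h..r+h} (\<phi> y) - integral {0..r} (\<phi> y)
        = integral {r..r+h} (\<phi> y) - integral {0..h} (\<phi> y)"
      using Henstock_Kurzweil_Integration.integral_combine[of 0 h "r+h" "\<phi> y"]
        Henstock_Kurzweil_Integration.integral_combine[of 0 r "r+h" "\<phi> y"]
        integrable_orbit_functional[of 0, where b="r+h" and z=z and y=y] r h
      by (simp add: \<phi>_def[abs_def])
    finally have "\<bar>(S_adj h Z - Z) \<bullet> y\<bar>
        \<le> (\<bar>integral {r..r+h} (\<phi> y)\<bar> + \<bar>integral {0..h} (\<phi> y)\<bar>) / r"
      using r by (simp add: abs_div divide_right_mono)
    also have "\<dots> \<le> (2 * (C * norm z * norm y * h)) / r"
      using integral_orbit_functional_bound[of r "r+h" C z y]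
        integral_orbit_functional_bound[of 0 h C z y] r h C(2)
      by (intro divide_right_mono) (auto simp: \<phi>_def[abs_def])
    finally show "\<bar>(S_adj h Z - Z) \<bullet> y\<bar> \<le> 2 * C * norm z / r * h * norm y"
      by (simp add: algebra_simps)
  qed (use C r h in auto)
  have "((\<lambda>h. S_adj h Z - Z) \<longlongrightarrow> 0) (at_right 0)"
  proof (rule Lim_null_comparison)
    show "\<forall>\<^sub>F h in at_right 0. norm (S_adj h Z - Z) \<le> 2 * C * norm z / r * h"
      unfolding eventually_at_right_field using bound by (intro exI[of _ 1]) auto
    show "((\<lambda>h. 2 * C * norm z / r * h) \<longlongrightarrow> 0) (at_right 0)"
      by (rule tendsto_mult_right_zero) (simp add: tendsto_ident_at)
  qed
  then show ?thesis using Lim_null by blast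
qed

lemma S_adj_right_continuous: "((\<lambda>h. S_adj h z) \<longlongrightarrow> z) (at_right 0)"
proof -
  define X where "X = {w. ((\<lambda>h. S_adj h w) \<longlongrightarrow> w) (at_right 0)}"
  obtain C where C: "C \<ge> 1" "\<And>t. t \<in> {0..1} \<Longrightarrow> norm (S t) \<le> C"
    using bounded_on_interval by blast
  have "\<And>h. linear (S_adj h)" using bounded_linear_S_adj bounded_linear.linear by blast
  moreover have "\<And>h x. h \<in> {0..1} \<Longrightarrow> norm (S_adj h x) \<le> C * norm x"
    using C(2) norm_S_adj_le by blast
  ultimately have X: "subspace X" "closed X"
    using closed_subspace_right_continuity_points[of S_adj 1 C] C(1) unfolding X_def by auto
  have "\<forall>r\<in>{0<..}. \<exists>Z. \<forall>y. integral {0..r} (\<lambda>s. z \<bullet> S s y) / r = Z \<bullet> y"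
    using averaged_orbit_representer by (metis greaterThan_iff)
  then obtain Z where Z: "\<And>r y. r > 0 \<Longrightarrow> integral {0..r} (\<lambda>s. z \<bullet> S s y) / r = Z r \<bullet> y"
    using bchoice[of "{0<..}"] by (metis greaterThan_iff)
  have "Z r \<in> X" if "r > 0" for r
    unfolding X_def using S_adj_averaged_representer_right_continuous[OF that Z[OF that]] by simp
  then have "\<forall>\<^sub>F r in at_right 0. Z r \<in> X"
    using eventually_at_right_less[of "0::real"] by (rule eventually_mono[rotated])
  moreover have "((\<lambda>r. Z r \<bullet> q) \<longlongrightarrow> z \<bullet> q) (at_right 0)" for q
  proof (rule Lim_transform_eventually)
    show "((\<lambda>r. integral {0..r} (\<lambda>s. z \<bullet> S s q) / r) \<longlongrightarrow> z \<bullet> q) (at_right 0)"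
      using average_tendsto_at_right[OF continuous_on_orbit_functional, of 1 z q] by (simp add: S_0)
    show "\<forall>\<^sub>F r in at_right 0. integral {0..r} (\<lambda>s. z \<bullet> S s q) / r = Z r \<bullet> q"
      using eventually_at_right_less[of "0::real"] by (rule eventually_mono) (rule Z)
  qed
  ultimately have "z \<in> X" by (intro mem_closed_subspace_of_weak_limit[OF X]) auto
  then show ?thesis by (simp add: X_def)
qed

lemma continuous_on_adjoint_orbit: "continuous_on {0..L} (\<lambda>t. S_adj t x)"
proof -
  obtain C where C: "C \<ge> 1" "\<And>t. t \<in> {0..L} \<Longrightarrow> norm (S t) \<le> C"
    using bounded_on_interval by blast
  show ?thesis
    by (rule semigroup_continuous_on[where C=C])
       (use C in \<open>auto simp: S_adj_add S_adj_right_continuous norm_S_adj_le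
         bounded_linear_S_adj bounded_linear.linear\<close>)
qed

end

section \<open>The controllability Gramian\<close>

lemma continuous_on_reflect_interval:
  fixes f :: "real \<Rightarrow> 'a::topological_space"
  assumes "continuous_on {0..T} f"
  shows "continuous_on {0..T} (\<lambda>s. f (T - s))"
  by (rule continuous_on_compose2[OF assms]) (auto intro: continuous_intros)

context hilbert_C0_semigroup
begin

lemma continuous_on_orbit_along:
  assumes "continuous_on {0..L} v"
  shows "continuous_on {0..L} (\<lambda>t. S t (v t))"
proof -
  obtain C where C: "C \<ge> 1" "\<And>t. t \<in> {0..L} \<Longrightarrow> norm (S t) \<le> C"
    using bounded_on_interval by blast
  show ?thesis
    by (rule continuous_on_apply_bounded_family[where C=C])
       (use C assms in \<open>auto simp: continuous_on_orbit norm_S_apply_le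
         blinfun.bounded_linear_right bounded_linear.linear\<close>)
qed

end

locale control_system = hilbert_C0_semigroup S
  for S :: "real \<Rightarrow> 'x::{real_inner,complete_space} \<Rightarrow>\<^sub>L 'x" +
  fixes B :: "'u::{real_inner,complete_space} \<Rightarrow>\<^sub>L 'x" and T :: real
  assumes T_pos: "T > 0"
begin

definition B_adj :: "'x \<Rightarrow> 'u" where "B_adj = adjoint (blinfun_apply B)"

definition gram_control :: "'x \<Rightarrow> real \<Rightarrow> 'u" where
  "gram_control x s = B_adj (S_adj (T - s) x)"

lemma B_adj_inner: "B u \<bullet> z = u \<bullet> B_adj z"
  unfolding B_adj_def by (rule adjoint_inner[OF blinfun.bounded_linear_right])

lemma bounded_linear_B_adj: "bounded_linear B_adj"
  unfolding B_adj_def by (rule bounded_linear_adjoint[OF blinfun.bounded_linear_right])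

lemma norm_B_adj_le: "norm (B_adj z) \<le> norm B * norm z"
  unfolding B_adj_def by (rule norm_adjoint_le[OF blinfun.bounded_linear_right]) (auto simp: norm_blinfun)

lemma gram_control_add: "gram_control (x + y) s = gram_control x s + gram_control y s"
  and gram_control_scaleR: "gram_control (c *\<^sub>R x) s = c *\<^sub>R gram_control x s"
  unfolding gram_control_def using bounded_linear_S_adj bounded_linear_B_adj
  by (simp_all add: linear_add linear_scale bounded_linear.linear)

lemma continuous_on_gram_control: "continuous_on {0..T} (gram_control x)"
  unfolding gram_control_def
  by (intro continuous_on_reflect_interval continuous_on_compose2[OF _ continuous_on_adjoint_orbit]
      linear_continuous_on bounded_linear_B_adj) auto

lemma gramian_eq_integral: "gramian S B T x = integral {0..T} (\<lambda>s. S (T - s) (B (gram_control x s)))"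
  unfolding gramian_def gram_control_def S_adj_def B_adj_def ..

lemma integrable_gramian_integrand: "(\<lambda>s. S (T - s) (B (gram_control x s))) integrable_on {0..T}"
proof -
  have "continuous_on UNIV B_adj" "continuous_on UNIV (blinfun_apply B)"
    by (intro linear_continuous_on bounded_linear_B_adj blinfun.bounded_linear_right)+
  then have "continuous_on {0..T} (\<lambda>t. B (B_adj (S_adj t x)))"
    using continuous_on_adjoint_orbit by (metis continuous_on_compose2 subset_UNIV)
  then have "continuous_on {0..T} (\<lambda>t. S t (B (B_adj (S_adj t x))))"
    by (rule continuous_on_orbit_along)
  then show ?thesis
    unfolding gram_control_def by (intro integrable_continuous_hilbert continuous_on_reflect_interval)
qed

lemma mild_solution_gram_control:
  "mild_solution S B y0 (gram_control x) T = S T y0 + gramian S B T x"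
  unfolding mild_solution_def gramian_eq_integral ..

lemma integral_inner_gram_control:
  assumes "(\<lambda>s. S (T - s) (B (u s))) integrable_on {0..T}"
  shows "integral {0..T} (\<lambda>s. S (T - s) (B (u s))) \<bullet> x = integral {0..T} (\<lambda>s. u s \<bullet> gram_control x s)"
proof -
  have "integral {0..T} (\<lambda>s. S (T - s) (B (u s))) \<bullet> x
      = integral {0..T} ((\<lambda>v. v \<bullet> x) \<circ> (\<lambda>s. S (T - s) (B (u s))))"
    by (rule integral_linear[OF assms bounded_linear_inner_left, symmetric])
  also have "\<dots> = integral {0..T} (\<lambda>s. u s \<bullet> gram_control x s)"
    by (simp add: o_def S_adj_inner B_adj_inner gram_control_def)
  finally show ?thesis .
qed

lemma continuous_on_gram_control_inner:
  "continuous_on {0..T} (\<lambda>s. gram_control x s \<bullet> gram_control y s)"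
  by (intro continuous_on_inner continuous_on_gram_control)

lemma gramian_inner:
  "gramian S B T x \<bullet> y = integral {0..T} (\<lambda>s. gram_control x s \<bullet> gram_control y s)"
  unfolding gramian_eq_integral by (rule integral_inner_gram_control[OF integrable_gramian_integrand])

lemma gramian_symmetric: "gramian S B T x \<bullet> y = x \<bullet> gramian S B T y"
  by (simp add: gramian_inner inner_commute[of x] inner_commute[of "gram_control x s" for s])

lemma gramian_nonneg: "gramian S B T x \<bullet> x \<ge> 0"
  unfolding gramian_inner
  by (rule integral_nonneg[OF integrable_continuous_interval[OF continuous_on_gram_control_inner]])
     simp

lemma gram_control_eq_0:
  assumes "gramian S B T x \<bullet> x = 0" and "s \<in> {0..T}"
  shows "gram_control x s = 0"
proof -
  have "gram_control x s \<bullet> gram_control x s = 0"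
  proof (rule has_integral_0_cbox_imp_0[of 0 T "\<lambda>s. gram_control x s \<bullet> gram_control x s"])
    show "((\<lambda>s. gram_control x s \<bullet> gram_control x s) has_integral 0) (cbox 0 T)"
      using assms(1) integrable_continuous_interval[OF continuous_on_gram_control_inner, of x x]
      unfolding gramian_inner by (simp add: has_integral_integral)
  qed (use assms(2) T_pos continuous_on_gram_control_inner in auto)
  then show ?thesis by simp
qed

lemma bounded_linear_gramian: "bounded_linear (gramian S B T)"
proof -
  obtain C where C: "C \<ge> 1" "\<And>t. t \<in> {0..T} \<Longrightarrow> norm (S t) \<le> C"
    using bounded_on_interval by blast
  define K where "K = norm B * C"
  have K: "K \<ge> 0" using C unfolding K_def by simp
  have control_bound: "norm (gram_control x s) \<le> K * norm x" if "s \<in> {0..T}" for x s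
  proof -
    have "norm (gram_control x s) \<le> norm B * norm (S_adj (T - s) x)"
      unfolding gram_control_def by (rule norm_B_adj_le)
    also have "\<dots> \<le> norm B * (C * norm x)"
      using that C by (intro mult_left_mono norm_S_adj_le) auto
    finally show ?thesis by (simp add: K_def algebra_simps)
  qed
  have "norm (gramian S B T x) \<le> K * K * T * norm x" for x
  proof (rule norm_le_if_inner_le)
    fix y
    have "norm (gram_control x s \<bullet> gram_control y s) \<le> K * norm x * (K * norm y)"
      if "s \<in> {0..T}" for s
    proof -
      have "\<bar>gram_control x s \<bullet> gram_control y s\<bar> \<le> norm (gram_control x s) * norm (gram_control y s)"
        by (rule Cauchy_Schwarz_ineq2)
      also have "\<dots> \<le> K * norm x * (K * norm y)"
        by (intro mult_mono control_bound that) (use K in auto)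
      finally show ?thesis by simp
    qed
    then have "norm (gramian S B T x \<bullet> y) \<le> K * norm x * (K * norm y) * (T - 0)"
      unfolding gramian_inner using T_pos
      by (intro integral_bound continuous_on_gram_control_inner) auto
    then show "\<bar>gramian S B T x \<bullet> y\<bar> \<le> K * K * T * norm x * norm y"
      by (simp add: algebra_simps)
  qed (use K T_pos in simp)
  moreover have "gramian S B T (x + y) = gramian S B T x + gramian S B T y" for x y
    by (rule vector_eq_rdot[THEN iffD1], rule allI)
       (simp add: gramian_inner gram_control_add inner_add_left integral_add
         integrable_continuous_interval[OF continuous_on_gram_control_inner])
  moreover have "gramian S B T (c *\<^sub>R x) = c *\<^sub>R gramian S B T x" for c x
    by (rule vector_eq_rdot[THEN iffD1], rule allI) (simp add: gramian_inner gram_control_scaleR)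
  ultimately show ?thesis
    by (intro bounded_linear_intro[where K="K * K * T"]) (auto simp: mult.commute)
qed

end

section \<open>Continuous controls are square integrable\<close>

definition grid_round :: "real \<Rightarrow> nat \<Rightarrow> real \<Rightarrow> real" where
  "grid_round T n s = T * real (min (Suc n) (nat \<lfloor>real (Suc n) * s / T\<rfloor>)) / real (Suc n)"

lemma finite_range_grid_round: "finite (range (grid_round T n))"
proof -
  have "range (grid_round T n) \<subseteq> (\<lambda>j. T * real j / real (Suc n)) ` {..Suc n}"
    unfolding grid_round_def by auto
  then show ?thesis by (rule finite_subset) simp
qed

lemma borel_measurable_grid_round: "grid_round T n \<in> borel_measurable borel"
proof -
  have real_nat: "real (nat k) = max 0 (real_of_int k)" for k by (cases "k \<ge> 0") auto
  have "grid_round T n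
      = (\<lambda>s. T * min (real (Suc n)) (max 0 (real_of_int \<lfloor>real (Suc n) * s / T\<rfloor>)) / real (Suc n))"
    by (intro ext) (simp only: grid_round_def of_nat_min real_nat)
  then show ?thesis by simp
qed

lemma grid_round_approx:
  assumes "T > 0" "s \<in> {0..T}"
  shows "grid_round T n s \<in> {0..T}" and "\<bar>grid_round T n s - s\<bar> \<le> T / real (Suc n)"
proof -
  define y where "y = real (Suc n) * s / T"
  have "0 \<le> y" using assms unfolding y_def by simp
  moreover have "y \<le> real (Suc n)"
    using assms mult_left_mono[of s T "real (Suc n)"] unfolding y_def by (simp add: divide_le_eq)
  ultimately have y: "0 \<le> \<lfloor>y\<rfloor>" "nat \<lfloor>y\<rfloor> \<le> Suc n" "real_of_int \<lfloor>y\<rfloor> \<le> y" "y < real_of_int \<lfloor>y\<rfloor> + 1"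
    by linarith+
  then have round: "grid_round T n s = T * real_of_int \<lfloor>y\<rfloor> / real (Suc n)"
    unfolding grid_round_def y_def[symmetric] by simp
  have "s = T * y / real (Suc n)" unfolding y_def using assms(1) by (simp del: of_nat_Suc)
  then have diff: "s - grid_round T n s = T * (y - real_of_int \<lfloor>y\<rfloor>) / real (Suc n)"
    unfolding round by (simp add: field_simps)
  have "y - real_of_int \<lfloor>y\<rfloor> \<le> 1" using y(4) by linarith
  then have "T * (y - real_of_int \<lfloor>y\<rfloor>) \<le> T" using assms(1) by (intro mult_left_le) auto
  then have "0 \<le> s - grid_round T n s" "s - grid_round T n s \<le> T / real (Suc n)"
    unfolding diff using assms(1) y(3) by (auto intro: divide_right_mono)
  moreover have "0 \<le> grid_round T n s" using assms(1) y(1) unfolding round by simp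
  ultimately show "grid_round T n s \<in> {0..T}" "\<bar>grid_round T n s - s\<bar> \<le> T / real (Suc n)"
    using assms(2) by auto
qed

lemma grid_round_tendsto:
  assumes "T > 0" "s \<in> {0..T}"
  shows "(\<lambda>n. grid_round T n s) \<longlonglongrightarrow> s"
proof -
  have "(\<lambda>n. grid_round T n s - s) \<longlonglongrightarrow> 0"
  proof (rule Lim_null_comparison)
    show "\<forall>\<^sub>F n in sequentially. norm (grid_round T n s - s) \<le> T / real (Suc n)"
      using grid_round_approx(2)[OF assms] by simp
    show "(\<lambda>n. T / real (Suc n)) \<longlonglongrightarrow> 0"
      using tendsto_mult_right_zero[OF LIMSEQ_inverse_real_of_nat, of T] by (simp add: divide_inverse)
  qed
  then show ?thesis using Lim_null by blast
qed

lemma strongly_measurable_on_continuous: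
  fixes u :: "real \<Rightarrow> 'u::real_normed_vector"
  assumes u: "continuous_on {0..T} u" and T: "T > 0"
  shows "strongly_measurable_on {0..T} u"
  unfolding strongly_measurable_on_def
proof (intro exI[of _ "\<lambda>n. u \<circ> grid_round T n"] conjI allI)
  fix n v
  show "finite (range (u \<circ> grid_round T n))"
    using finite_imageI[OF finite_range_grid_round, of u] by (simp add: image_image)
  have "closed {t \<in> range (grid_round T n). u t = v}"
    using finite_range_grid_round by (intro finite_imp_closed) simp
  then have "grid_round T n -` {t \<in> range (grid_round T n). u t = v} \<in> sets borel"
    by (rule measurable_sets_borel[OF borel_measurable_grid_round borel_closed])
  moreover have "(u \<circ> grid_round T n) -` {v} = grid_round T n -` {t \<in> range (grid_round T n). u t = v}"
    by auto
  ultimately have "(u \<circ> grid_round T n) -` {v} \<in> sets lebesgue"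
    by (metis sets_completionI_sets sets_lborel)
  then show "(u \<circ> grid_round T n) -` {v} \<inter> {0..T} \<in> sets lebesgue" by auto
next
  have "(\<lambda>n. u (grid_round T n s)) \<longlonglongrightarrow> u s" if "s \<in> {0..T}" for s
    using u grid_round_tendsto[OF T that] grid_round_approx(1)[OF T that] that
    unfolding continuous_on_sequentially by (auto simp: o_def)
  then show "AE s in lebesgue_on {0..T}. (\<lambda>n. (u \<circ> grid_round T n) s) \<longlonglongrightarrow> u s"
    by (intro AE_I2) simp
qed

lemma continuous_in_L2_controls:
  fixes u :: "real \<Rightarrow> 'u::real_normed_vector"
  assumes "continuous_on {0..T} u" "T > 0"
  shows "u \<in> L2_controls T"
proof -
  have "continuous_on {0..T} (\<lambda>s. (norm (u s))\<^sup>2)"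
    using assms(1) by (intro continuous_intros)
  then show ?thesis
    unfolding L2_controls_def
    using strongly_measurable_on_continuous[OF assms] continuous_imp_integrable_real by blast
qed

section \<open>Regularized inverses of nonnegative operators\<close>

lemma linear_inv_if_bij:
  assumes "linear f" "bij f"
  shows "linear (inv f)"
proof (rule linearI)
  have f_inv: "f (inv f z) = z" for z using assms(2) by (simp add: bij_is_surj surj_f_inv_f)
  have "inj f" using assms(2) by (rule bij_is_inj)
  show "inv f (a + b) = inv f a + inv f b" for a b
    by (rule injD[OF \<open>inj f\<close>]) (simp add: f_inv linear_add[OF assms(1)])
  show "inv f (c *\<^sub>R a) = c *\<^sub>R inv f a" for c a
    by (rule injD[OF \<open>inj f\<close>]) (simp add: f_inv linear_scale[OF assms(1)])
qed

lemma coercive_norm_ge: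
  fixes L :: "'a::real_inner \<Rightarrow> 'a"
  assumes "\<And>y. c * (norm y)\<^sup>2 \<le> L y \<bullet> y"
  shows "c * norm y \<le> norm (L y)"
proof (cases "y = 0")
  case False
  have "c * norm y * norm y \<le> norm (L y) * norm y"
    using assms[of y] norm_cauchy_schwarz[of "L y" y] by (simp add: power2_eq_square algebra_simps)
  then show ?thesis using False by simp
qed (use assms[of 0] in simp)

lemma closed_range_if_bounded_below:
  fixes L :: "'a::{real_normed_vector,complete_space} \<Rightarrow> 'b::real_normed_vector"
  assumes bl: "bounded_linear L" and c: "c > 0" and lower: "\<And>y. c * norm y \<le> norm (L y)"
  shows "closed (range L)"
  unfolding closed_sequential_limits
proof (intro allI impI, elim conjE)
  have lin: "linear L" using bl bounded_linear.linear by blast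
  fix ys l assume "\<forall>n. ys n \<in> range L" and ys: "ys \<longlonglongrightarrow> l"
  then obtain xs where xs: "\<And>n. ys n = L (xs n)" using choice[of "\<lambda>n x. ys n = L x"] by blast
  have "Cauchy xs"
  proof (rule metric_CauchyI)
    fix r :: real assume r: "r > 0"
    obtain N where N: "\<forall>m\<ge>N. \<forall>n\<ge>N. dist (ys m) (ys n) < c * r"
      using metric_CauchyD[OF LIMSEQ_imp_Cauchy[OF ys]] c r by (meson mult_pos_pos)
    have "dist (xs m) (xs n) < r" if "m \<ge> N" "n \<ge> N" for m n
    proof -
      have "c * norm (xs m - xs n) \<le> dist (ys m) (ys n)"
        using lower[of "xs m - xs n"] linear_diff[OF lin] xs by (simp add: dist_norm)
      also have "\<dots> < c * r" using N that by blast
      finally show ?thesis using c by (simp add: dist_norm)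
    qed
    then show "\<exists>N. \<forall>m\<ge>N. \<forall>n\<ge>N. dist (xs m) (xs n) < r" by blast
  qed
  then obtain x where "xs \<longlonglongrightarrow> x" using Cauchy_convergent convergent_def by blast
  then have "ys \<longlonglongrightarrow> L x"
    unfolding xs by (intro isCont_tendsto_compose[OF linear_continuous_at[OF bl]])
  then show "l \<in> range L" using ys LIMSEQ_unique by blast
qed

lemma coercive_bij:
  fixes L :: "'a::{real_inner,complete_space} \<Rightarrow> 'a"
  assumes bl: "bounded_linear L" and c: "c > 0" and coercive: "\<And>y. c * (norm y)\<^sup>2 \<le> L y \<bullet> y"
  shows "bij L"
proof -
  have lin: "linear L" using bl bounded_linear.linear by blast
  have lower: "c * norm y \<le> norm (L y)" for y by (rule coercive_norm_ge[OF coercive])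
  have "inj L"
  proof (rule injI)
    fix a b assume "L a = L b"
    then have "c * norm (a - b) \<le> 0" using lower[of "a - b"] linear_diff[OF lin] by simp
    then show "a = b" using c by (simp add: mult_le_0_iff)
  qed
  moreover have "range L = UNIV"
    using closed_range_if_bounded_below[OF bl c lower]
  proof (rule closed_subspace_eq_UNIV_if_orthogonal_trivial[OF linear_subspace_image[OF lin subspace_UNIV]])
    fix q assume "\<And>v. v \<in> range L \<Longrightarrow> q \<bullet> v = 0"
    then have "L q \<bullet> q = 0" by (metis inner_commute rangeI)
    then have "c * (norm q)\<^sup>2 \<le> 0" using coercive[of q] by simp
    then show "q = 0" using c by (simp add: mult_le_0_iff)
  qed
  ultimately show ?thesis by (simp add: bij_def)
qed

locale positive_operator =
  fixes G :: "'a::{real_inner,complete_space} \<Rightarrow> 'a"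
  assumes bounded_linear_G: "bounded_linear G"
    and symmetric: "\<And>x y. G x \<bullet> y = x \<bullet> G y"
    and nonneg: "\<And>x. G x \<bullet> x \<ge> 0"
begin

lemma linear_G: "linear G"
  using bounded_linear_G bounded_linear.linear by blast

lemma eq_0_if_form_eq_0:
  assumes "G x \<bullet> x = 0"
  shows "G x = 0"
proof (rule ccontr)
  assume "G x \<noteq> 0"
  define y where "y = G x"
  define c where "c = G x \<bullet> y"
  define a where "a = G y \<bullet> y"
  define s where "s = c / (a + 1)"
  have c0: "c > 0" using \<open>G x \<noteq> 0\<close> unfolding c_def y_def by simp
  have a0: "a \<ge> 0" unfolding a_def by (rule nonneg)
  have s0: "s > 0" using c0 a0 unfolding s_def by simp
  text \<open>The form is nonnegative along the line \<open>x - s y\<close>, which forces \<open>c \<le> 0\<close>.\<close>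
  have "0 \<le> G (x - s *\<^sub>R y) \<bullet> (x - s *\<^sub>R y)" by (rule nonneg)
  also have "\<dots> = G x \<bullet> x - s * (G x \<bullet> y) - s * (G y \<bullet> x) + s * s * (G y \<bullet> y)"
    by (simp add: linear_diff[OF linear_G] linear_scale[OF linear_G] inner_diff_left inner_diff_right
        algebra_simps)
  also have "\<dots> = s * s * a - 2 * s * c"
    using assms symmetric[of y x] unfolding c_def a_def by (simp add: inner_commute)
  finally have "2 * c \<le> s * a" using s0 by (simp add: power2_eq_square algebra_simps)
  also have "s * a = c * (a / (a + 1))" unfolding s_def by simp
  also have "\<dots> \<le> c" using c0 a0 by (intro mult_left_le) auto
  finally show False using c0 by simp
qed

abbreviation regularized_inverse :: "real \<Rightarrow> 'a \<Rightarrow> 'a" where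
  "regularized_inverse e \<equiv> inv (\<lambda>y. e *\<^sub>R y + G y)"

lemma regularized_bij: "e > 0 \<Longrightarrow> bij (\<lambda>y. e *\<^sub>R y + G y)"
  by (rule coercive_bij[where c=e])
     (use nonneg in \<open>auto intro: bounded_linear_add bounded_linear_scaleR_right bounded_linear_G
       simp: inner_add_left power2_norm_eq_inner\<close>)

lemma regularized_inverse_left: "e > 0 \<Longrightarrow> regularized_inverse e (e *\<^sub>R v + G v) = v"
  using regularized_bij bij_is_inj inv_f_f by fast

lemma regularized_inverse_right:
  "e > 0 \<Longrightarrow> e *\<^sub>R regularized_inverse e z + G (regularized_inverse e z) = z"
  using regularized_bij[of e] bij_is_surj surj_f_inv_f[of "\<lambda>y. e *\<^sub>R y + G y"] by fast

lemma linear_regularized_inverse: "e > 0 \<Longrightarrow> linear (regularized_inverse e)"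
  by (intro linear_inv_if_bij regularized_bij bounded_linear.linear
      bounded_linear_add[OF bounded_linear_scaleR_right bounded_linear_G])

lemma norm_scaled_regularized_inverse_le:
  assumes "e > 0"
  shows "norm (e *\<^sub>R regularized_inverse e z) \<le> norm z"
proof -
  let ?y = "regularized_inverse e z"
  have "e * norm ?y \<le> norm (e *\<^sub>R ?y + G ?y)"
    by (rule coercive_norm_ge) (simp add: inner_add_left power2_norm_eq_inner nonneg)
  then have "e * norm ?y \<le> norm z" by (simp only: regularized_inverse_right[OF assms])
  then show ?thesis using assms by simp
qed

end

lemma subspace_closure:
  fixes S :: "'a::real_normed_vector set"
  assumes "subspace S"
  shows "subspace (closure S)"
  unfolding subspace_def
proof (intro conjI ballI allI)
  show "0 \<in> closure S" using assms closure_subset subspace_0 by blast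
  fix x y assume "x \<in> closure S" "y \<in> closure S"
  then obtain f g where "\<forall>n. f n \<in> S" "f \<longlonglongrightarrow> x" "\<forall>n. g n \<in> S" "g \<longlonglongrightarrow> y"
    unfolding closure_sequential by blast
  then show "x + y \<in> closure S"
    unfolding closure_sequential
    by (intro exI[of _ "\<lambda>n. f n + g n"]) (auto intro: tendsto_add subspace_add[OF assms])
next
  fix c x assume "x \<in> closure S"
  then obtain f where "\<forall>n. f n \<in> S" "f \<longlonglongrightarrow> x" unfolding closure_sequential by blast
  then show "c *\<^sub>R x \<in> closure S"
    unfolding closure_sequential
    by (intro exI[of _ "\<lambda>n. c *\<^sub>R f n"]) (auto intro: tendsto_scaleR tendsto_const subspace_scale[OF assms])
qed

lemma tendsto_0_if_tendsto_0_on_dense: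
  fixes A :: "'i \<Rightarrow> 'a::real_normed_vector \<Rightarrow> 'b::real_normed_vector"
  assumes bounded: "\<forall>\<^sub>F i in F. linear (A i) \<and> (\<forall>z. norm (A i z) \<le> C * norm z)"
    and "C \<ge> 0" and x: "x \<in> closure D" and dense: "\<And>y. y \<in> D \<Longrightarrow> ((\<lambda>i. A i y) \<longlongrightarrow> 0) F"
  shows "((\<lambda>i. A i x) \<longlongrightarrow> 0) F"
  unfolding tendsto_iff
proof (intro allI impI)
  fix r :: real assume r: "r > 0"
  define \<delta> where "\<delta> = r / (2 * (C + 1))"
  have \<delta>: "\<delta> > 0" "C * \<delta> < r / 2" using r \<open>C \<ge> 0\<close> by (simp_all add: \<delta>_def field_simps)
  obtain y where y: "y \<in> D" "dist y x < \<delta>" using x \<delta>(1) closure_approachable by blast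
  have "\<forall>\<^sub>F i in F. dist (A i y) 0 < r / 2" using dense[OF y(1)] r by (intro tendstoD) auto
  with bounded show "\<forall>\<^sub>F i in F. dist (A i x) 0 < r"
  proof eventually_elim
    case (elim i)
    have "A i x = A i (x - y) + A i y" using elim(1) by (simp add: linear_diff)
    then have "norm (A i x) \<le> norm (A i (x - y)) + norm (A i y)" by (metis norm_triangle_ineq)
    moreover have "norm (A i (x - y)) \<le> C * norm (x - y)" using elim(1) by blast
    ultimately have "norm (A i x) \<le> C * norm (x - y) + norm (A i y)" by linarith
    also have "\<dots> \<le> C * \<delta> + norm (A i y)"
      using y(2) \<open>C \<ge> 0\<close> by (auto simp: dist_norm norm_minus_commute intro: mult_left_mono)
    finally show ?case using \<delta>(2) elim(2) by simp
  qed
qed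

lemma tendsto_const_at_right_0:
  fixes x :: "'b::real_normed_vector"
  assumes "\<forall>\<^sub>F e in at_right (0::real). f e = x" "(f \<longlongrightarrow> 0) (at_right 0)"
  shows "x = 0"
  using tendsto_unique[OF trivial_limit_at_right_real Lim_transform_eventually[OF assms(2,1)]]
    tendsto_const by blast

context positive_operator
begin

lemma closure_range_eq_UNIV_if_positive:
  assumes pos: "\<And>x. x \<noteq> 0 \<Longrightarrow> G x \<bullet> x > 0"
  shows "closure (range G) = UNIV"
proof (rule closed_subspace_eq_UNIV_if_orthogonal_trivial)
  show "subspace (closure (range G))"
    by (intro subspace_closure linear_subspace_image[OF linear_G subspace_UNIV])
  fix q assume "\<And>v. v \<in> closure (range G) \<Longrightarrow> q \<bullet> v = 0"
  then have "G q \<bullet> q = 0" using closure_subset by (metis inner_commute rangeI subsetD)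
  then show "q = 0" using pos by force
qed simp

lemma scaled_regularized_inverse_tendsto_0_if_positive:
  assumes pos: "\<And>x. x \<noteq> 0 \<Longrightarrow> G x \<bullet> x > 0"
  shows "((\<lambda>e. e *\<^sub>R regularized_inverse e x) \<longlongrightarrow> 0) (at_right 0)"
proof (rule tendsto_0_if_tendsto_0_on_dense[where C=1 and D="range G"])
  show "\<forall>\<^sub>F e in at_right 0. linear (\<lambda>z. e *\<^sub>R regularized_inverse e z)
      \<and> (\<forall>z. norm (e *\<^sub>R regularized_inverse e z) \<le> 1 * norm z)"
    using eventually_at_right_less[of "0::real"]
  proof eventually_elim
    case (elim e)
    show ?case
      using linear_compose[OF linear_regularized_inverse[OF elim] bounded_linear.linear[OF bounded_linear_scaleR_right]]
        norm_scaled_regularized_inverse_le[OF elim] by (simp add: o_def)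
  qed
  show "x \<in> closure (range G)" using closure_range_eq_UNIV_if_positive[OF pos] by simp
  fix y assume "y \<in> range G"
  then obtain z where y: "y = G z" by blast
  text \<open>On the range of G, \<open>e (e I + G)\<^sup>-\<^sup>1 G z = e z - e\<^sup>2 (e I + G)\<^sup>-\<^sup>1 z = O(e)\<close>.\<close>
  have "\<forall>\<^sub>F e in at_right 0. norm (e *\<^sub>R regularized_inverse e y) \<le> 2 * norm z * e"
    using eventually_at_right_less[of "0::real"]
  proof eventually_elim
    case (elim e)
    have "regularized_inverse e (e *\<^sub>R z + G z) = z" by (rule regularized_inverse_left[OF elim])
    then have "regularized_inverse e (G z) = z - e *\<^sub>R regularized_inverse e z"
      using linear_regularized_inverse[OF elim] by (simp add: linear_add linear_scale eq_diff_eq add.commute)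
    then have "e *\<^sub>R regularized_inverse e y = e *\<^sub>R z - e *\<^sub>R (e *\<^sub>R regularized_inverse e z)"
      unfolding y by (simp add: scaleR_diff_right)
    also have "norm \<dots> \<le> e * norm z + e * norm z"
      using norm_triangle_ineq4 norm_scaled_regularized_inverse_le[OF elim, of z] elim
      by (smt (verit) mult_left_mono norm_scaleR)
    finally show ?case by (simp add: algebra_simps)
  qed
  moreover have "((\<lambda>e. 2 * norm z * e) \<longlongrightarrow> 0) (at_right (0::real))"
    by (rule tendsto_mult_right_zero) (simp add: tendsto_ident_at)
  ultimately show "((\<lambda>e. e *\<^sub>R regularized_inverse e y) \<longlongrightarrow> 0) (at_right 0)"
    by (rule Lim_null_comparison)
qed simp

lemma positive_if_scaled_regularized_inverse_tendsto_0:
  assumes lim: "\<And>x. ((\<lambda>e. e *\<^sub>R regularized_inverse e x) \<longlongrightarrow> 0) (at_right 0)"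
    and "x \<noteq> 0"
  shows "G x \<bullet> x > 0"
proof (rule ccontr)
  assume "\<not> G x \<bullet> x > 0"
  then have "G x = 0" using nonneg[of x] eq_0_if_form_eq_0 by force
  have "\<forall>\<^sub>F e in at_right 0. e *\<^sub>R regularized_inverse e x = x"
    using eventually_at_right_less[of "0::real"]
  proof eventually_elim
    case (elim e)
    have "e *\<^sub>R ((1/e) *\<^sub>R x) + G ((1/e) *\<^sub>R x) = x"
      using elim \<open>G x = 0\<close> linear_scale[OF linear_G] by simp
    then show ?case using regularized_inverse_left[OF elim, of "(1/e) *\<^sub>R x"] elim by simp
  qed
  then have "x = 0" using lim by (rule tendsto_const_at_right_0)
  then show False using \<open>x \<noteq> 0\<close> by blast
qed

end

section \<open>Projections onto finite-dimensional subspaces\<close>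

lemma finite_span_orthonormal_basis:
  fixes F :: "'a::real_inner set"
  assumes "finite F"
  obtains E where "finite E" "span E = span F" "\<And>e. e \<in> E \<Longrightarrow> norm e = 1"
    "\<And>e e'. e \<in> E \<Longrightarrow> e' \<in> E \<Longrightarrow> e \<noteq> e' \<Longrightarrow> e \<bullet> e' = 0"
proof -
  obtain C where C: "finite C" "span C = span F" "pairwise orthogonal C"
    using basis_orthogonal[OF assms] by blast
  define E where "E = (\<lambda>c. c /\<^sub>R norm c) ` (C - {0})"
  have "e \<bullet> e' = 0" if ee': "e \<in> E" "e' \<in> E" "e \<noteq> e'" for e e'
  proof -
    obtain c c' where c: "c \<in> C" "c' \<in> C" "e = c /\<^sub>R norm c" "e' = c' /\<^sub>R norm c'"
      using ee'(1,2) unfolding E_def by auto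
    moreover have "c \<noteq> c'" using ee'(3) c by auto
    ultimately have "c \<bullet> c' = 0" using C(3) unfolding pairwise_def orthogonal_def by blast
    then show ?thesis using c by simp
  qed
  moreover have "span E = span C"
  proof (rule span_eq[THEN iffD2], intro conjI)
    show "E \<subseteq> span C" unfolding E_def by (auto intro: span_scale span_base)
    have "c \<in> span E" if "c \<in> C" "c \<noteq> 0" for c
      using span_scale[OF span_base, of "c /\<^sub>R norm c" E "norm c"] that by (simp add: E_def)
    then show "C \<subseteq> span E" using span_zero by blast
  qed
  moreover have "finite E" using C(1) unfolding E_def by simp
  moreover have "norm e = 1" if "e \<in> E" for e
    using that unfolding E_def by (auto simp: sgn_div_norm[symmetric] norm_sgn split: if_splits)
  ultimately show ?thesis using that C(2) by auto
qed

locale finite_orthonormal_basis =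
  fixes E :: "'a::real_inner set" and M :: "'a set"
  assumes finite_E: "finite E" and M_eq: "M = span E" and norm_E: "\<And>e. e \<in> E \<Longrightarrow> norm e = 1"
    and orthogonal_E: "\<And>e e'. e \<in> E \<Longrightarrow> e' \<in> E \<Longrightarrow> e \<noteq> e' \<Longrightarrow> e \<bullet> e' = 0"
begin

definition P :: "'a \<Rightarrow> 'a" where "P x = (\<Sum>e\<in>E. (x \<bullet> e) *\<^sub>R e)"

lemma P_in_M: "P x \<in> M"
  unfolding P_def M_eq by (intro span_sum span_scale span_base)

lemma P_inner_basis: "e' \<in> E \<Longrightarrow> P x \<bullet> e' = x \<bullet> e'"
proof -
  assume e': "e' \<in> E"
  have "P x \<bullet> e' = (\<Sum>e\<in>E. (x \<bullet> e) * (e \<bullet> e'))" unfolding P_def by (simp add: inner_sum_left)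
  also have "\<dots> = (\<Sum>e\<in>{e'}. (x \<bullet> e) * (e \<bullet> e'))"
    by (rule sum.mono_neutral_right) (use finite_E e' orthogonal_E in auto)
  also have "\<dots> = x \<bullet> e'" using norm_E[OF e'] by (simp add: dot_square_norm)
  finally show ?thesis .
qed

lemma P_orthogonal: "v \<in> M \<Longrightarrow> (x - P x) \<bullet> v = 0"
  using orthogonal_to_span[of v E "x - P x"] P_inner_basis
  by (auto simp: M_eq orthogonal_def inner_diff_left orthogonal_commute)

lemma orth_proj_eq_P: "orth_proj M = P"
proof
  fix x
  show "orth_proj M x = P x"
    unfolding orth_proj_def
  proof (rule the_equality)
    fix m assume m: "m \<in> M \<and> (\<forall>v\<in>M. (x - m) \<bullet> v = 0)"
    have "P x - m \<in> M" using m P_in_M by (simp add: M_eq span_diff)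
    then have "(x - m) \<bullet> (P x - m) = 0" "(x - P x) \<bullet> (P x - m) = 0"
      using m P_orthogonal by auto
    then have "(P x - m) \<bullet> (P x - m) = 0"
      by (simp add: inner_diff_left inner_diff_right algebra_simps)
    then show "m = P x" by simp
  qed (use P_in_M P_orthogonal in blast)
qed

lemma linear_P: "linear P"
  unfolding P_def
  by (rule linearI) (simp_all add: inner_add_left scaleR_add_left sum.distrib scaleR_sum_right)

lemma P_idem: "P (P x) = P x"
proof -
  have "(P x - P (P x)) \<bullet> (P x - P (P x)) = 0"
    using P_orthogonal[of "P x - P (P x)" "P x"] P_in_M by (simp add: M_eq span_diff)
  then show ?thesis by simp
qed

lemma norm_diff_P_le: "norm (x - P x) \<le> norm x"
proof -
  have "(x - P x) \<bullet> P x = 0" using P_orthogonal P_in_M by blast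
  then have "(norm x)\<^sup>2 = (norm (P x))\<^sup>2 + (norm (x - P x))\<^sup>2"
    using norm_add_Pythagorean[of "x - P x" "P x"] by (simp add: orthogonal_def)
  then show ?thesis by (metis le_add_same_cancel2 norm_ge_zero power2_le_imp_le zero_le_power2)
qed

lemma norm_linear_P_le:
  fixes Q :: "'a \<Rightarrow> 'b::real_normed_vector"
  assumes "linear Q"
  shows "norm (Q (P v)) \<le> norm v * (\<Sum>e\<in>E. norm (Q e))"
proof -
  have "norm (Q (P v)) = norm (\<Sum>e\<in>E. (v \<bullet> e) *\<^sub>R Q e)"
    unfolding P_def using assms by (simp add: linear_sum linear_scale)
  also have "\<dots> \<le> (\<Sum>e\<in>E. norm ((v \<bullet> e) *\<^sub>R Q e))" by (rule norm_sum)
  also have "\<dots> \<le> (\<Sum>e\<in>E. norm v * norm (Q e))"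
  proof (rule sum_mono)
    fix e assume "e \<in> E"
    then have "\<bar>v \<bullet> e\<bar> \<le> norm v" using Cauchy_Schwarz_ineq2[of v e] norm_E by simp
    then show "norm ((v \<bullet> e) *\<^sub>R Q e) \<le> norm v * norm (Q e)" by (simp add: mult_right_mono)
  qed
  finally show ?thesis by (simp add: sum_distrib_left)
qed

end

locale positive_operator_projection = positive_operator G + finite_orthonormal_basis E M
  for G :: "'a::{real_inner,complete_space} \<Rightarrow> 'a" and E :: "'a set" and M :: "'a set"
begin

lemma projected_regularization_eq_iff:
  assumes "e > 0"
  shows "e *\<^sub>R (w - P w) + G w = y \<longleftrightarrow> regularized_inverse e (y + e *\<^sub>R P w) = w"
proof
  assume "e *\<^sub>R (w - P w) + G w = y"
  then have "e *\<^sub>R w + G w = y + e *\<^sub>R P w" by (simp add: scaleR_diff_right algebra_simps)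
  then show "regularized_inverse e (y + e *\<^sub>R P w) = w" using regularized_inverse_left[OF assms, of w] by simp
next
  assume "regularized_inverse e (y + e *\<^sub>R P w) = w"
  then have "e *\<^sub>R w + G w = y + e *\<^sub>R P w"
    using regularized_inverse_right[OF assms, of "y + e *\<^sub>R P w"] by simp
  then show "e *\<^sub>R (w - P w) + G w = y" by (simp add: scaleR_diff_right algebra_simps)
qed

lemma norm_scaled_regularized_inverse_P_le:
  assumes "e > 0" and small: "(\<Sum>i\<in>E. norm (e *\<^sub>R regularized_inverse e i)) \<le> 1/2"
  shows "norm (e *\<^sub>R regularized_inverse e (P v)) \<le> 1/2 * norm v"
proof -
  have "linear (\<lambda>v. e *\<^sub>R regularized_inverse e v)"
    using linear_compose[OF linear_regularized_inverse[OF assms(1)]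
        bounded_linear.linear[OF bounded_linear_scaleR_right]]
    by (simp add: o_def)
  then have "norm (e *\<^sub>R regularized_inverse e (P v))
      \<le> norm v * (\<Sum>i\<in>E. norm (e *\<^sub>R regularized_inverse e i))"
    by (rule norm_linear_P_le)
  also have "\<dots> \<le> norm v * (1/2)" using small by (intro mult_left_mono) auto
  finally show ?thesis by simp
qed

text \<open>\<open>e (I - P) + G = (e I + G) (I - e (e I + G)\<^sup>-\<^sup>1 P)\<close>, and the second factor is a perturbation
  of the identity by a map of norm at most 1/2, hence invertible by the contraction principle.\<close>

lemma projected_regularization_bij:
  assumes e: "e > 0" and small: "(\<Sum>i\<in>E. norm (e *\<^sub>R regularized_inverse e i)) \<le> 1/2"
  shows "bij (\<lambda>y. e *\<^sub>R (y - P y) + G y)"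
proof -
  have "\<exists>!w. regularized_inverse e (y + e *\<^sub>R P w) = w" for y
  proof (rule banach_fix_type[where c="1/2"])
    show "\<forall>w w'. dist (regularized_inverse e (y + e *\<^sub>R P w)) (regularized_inverse e (y + e *\<^sub>R P w'))
        \<le> 1/2 * dist w w'"
    proof (intro allI)
      fix w w'
      have lin: "linear (regularized_inverse e)" by (rule linear_regularized_inverse[OF e])
      have "regularized_inverse e (y + e *\<^sub>R P w) - regularized_inverse e (y + e *\<^sub>R P w')
          = regularized_inverse e ((y + e *\<^sub>R P w) - (y + e *\<^sub>R P w'))"
        by (rule linear_diff[OF lin, symmetric])
      also have "(y + e *\<^sub>R P w) - (y + e *\<^sub>R P w') = e *\<^sub>R P (w - w')"
        by (simp add: linear_diff[OF linear_P] scaleR_diff_right)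
      also have "regularized_inverse e (e *\<^sub>R P (w - w')) = e *\<^sub>R regularized_inverse e (P (w - w'))"
        by (rule linear_scale[OF lin])
      finally have "regularized_inverse e (y + e *\<^sub>R P w) - regularized_inverse e (y + e *\<^sub>R P w')
          = e *\<^sub>R regularized_inverse e (P (w - w'))" .
      then show "dist (regularized_inverse e (y + e *\<^sub>R P w)) (regularized_inverse e (y + e *\<^sub>R P w'))
          \<le> 1/2 * dist w w'"
        using norm_scaled_regularized_inverse_P_le[OF e small, of "w - w'"] by (simp add: dist_norm)
    qed
  qed auto
  then show ?thesis
    unfolding bij_iff using projected_regularization_eq_iff[OF e] by simp
qed

lemma norm_scaled_inv_projected_regularization_le:
  assumes e: "e > 0" and small: "(\<Sum>i\<in>E. norm (e *\<^sub>R regularized_inverse e i)) \<le> 1/2"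
  shows "norm (e *\<^sub>R inv (\<lambda>y. e *\<^sub>R (y - P y) + G y) x) \<le> 2 * norm (e *\<^sub>R regularized_inverse e x)"
proof -
  define w where "w = inv (\<lambda>y. e *\<^sub>R (y - P y) + G y) x"
  have "e *\<^sub>R (w - P w) + G w = x"
    unfolding w_def using surj_f_inv_f[OF bij_is_surj[OF projected_regularization_bij[OF e small]], of x]
    by simp
  then have "regularized_inverse e (x + e *\<^sub>R P w) = w"
    using projected_regularization_eq_iff[OF e] by blast
  moreover have "regularized_inverse e (x + e *\<^sub>R P w)
      = regularized_inverse e x + regularized_inverse e (P (e *\<^sub>R w))"
    using linear_regularized_inverse[OF e] linear_P by (simp add: linear_add linear_scale)
  ultimately have "e *\<^sub>R w = e *\<^sub>R regularized_inverse e x + e *\<^sub>R regularized_inverse e (P (e *\<^sub>R w))"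
    by (metis scaleR_add_right)
  then have "norm (e *\<^sub>R w)
      \<le> norm (e *\<^sub>R regularized_inverse e x) + norm (e *\<^sub>R regularized_inverse e (P (e *\<^sub>R w)))"
    by (metis norm_triangle_ineq)
  also have "\<dots> \<le> norm (e *\<^sub>R regularized_inverse e x) + 1/2 * norm (e *\<^sub>R w)"
    using norm_scaled_regularized_inverse_P_le[OF e small] by (intro add_left_mono)
  finally show ?thesis unfolding w_def by simp
qed

lemma projected_regularization_conditions_if_positive:
  assumes pos: "\<And>x. x \<noteq> 0 \<Longrightarrow> G x \<bullet> x > 0"
  shows "\<forall>\<^sub>F e in at_right 0. bij (\<lambda>y. e *\<^sub>R (y - orth_proj M y) + G y)"
    and "((\<lambda>e. e *\<^sub>R inv (\<lambda>y. e *\<^sub>R (y - orth_proj M y) + G y) x) \<longlongrightarrow> 0) (at_right 0)"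
proof -
  have lim: "((\<lambda>e. e *\<^sub>R regularized_inverse e x) \<longlongrightarrow> 0) (at_right 0)" for x
    by (rule scaled_regularized_inverse_tendsto_0_if_positive[OF pos])
  have "((\<lambda>e. \<Sum>i\<in>E. norm (e *\<^sub>R regularized_inverse e i)) \<longlongrightarrow> (\<Sum>i\<in>E. 0)) (at_right 0)"
    by (intro tendsto_sum tendsto_norm_zero lim)
  then have "\<forall>\<^sub>F e in at_right 0. (\<Sum>i\<in>E. norm (e *\<^sub>R regularized_inverse e i)) < 1/2"
    by (rule order_tendstoD) simp
  then have small: "\<forall>\<^sub>F e in at_right 0. e > 0 \<and> (\<Sum>i\<in>E. norm (e *\<^sub>R regularized_inverse e i)) \<le> 1/2"
    using eventually_at_right_less[of "0::real"] by eventually_elim auto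
  then show "\<forall>\<^sub>F e in at_right 0. bij (\<lambda>y. e *\<^sub>R (y - orth_proj M y) + G y)"
    by eventually_elim (unfold orth_proj_eq_P, blast intro: projected_regularization_bij)
  show "((\<lambda>e. e *\<^sub>R inv (\<lambda>y. e *\<^sub>R (y - orth_proj M y) + G y) x) \<longlongrightarrow> 0) (at_right 0)"
  proof (rule Lim_null_comparison)
    show "\<forall>\<^sub>F e in at_right 0. norm (e *\<^sub>R inv (\<lambda>y. e *\<^sub>R (y - orth_proj M y) + G y) x)
        \<le> 2 * norm (e *\<^sub>R regularized_inverse e x)"
      using small
      by eventually_elim (unfold orth_proj_eq_P, blast intro: norm_scaled_inv_projected_regularization_le)
    show "((\<lambda>e. 2 * norm (e *\<^sub>R regularized_inverse e x)) \<longlongrightarrow> 0) (at_right 0)"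
      by (intro tendsto_mult_right_zero tendsto_norm_zero lim)
  qed
qed

lemma positive_if_projected_regularization_conditions:
  assumes bij: "\<forall>\<^sub>F e in at_right 0. bij (\<lambda>y. e *\<^sub>R (y - orth_proj M y) + G y)"
    and lim: "\<And>x. ((\<lambda>e. e *\<^sub>R inv (\<lambda>y. e *\<^sub>R (y - orth_proj M y) + G y) x) \<longlongrightarrow> 0) (at_right 0)"
    and "x \<noteq> 0"
  shows "G x \<bullet> x > 0"
proof (rule ccontr)
  assume "\<not> G x \<bullet> x > 0"
  then have "G x = 0" using nonneg[of x] eq_0_if_form_eq_0 by force
  text \<open>A kernel vector x is recovered from \<open>x - P x\<close> by every \<open>e (e (I - P) + G)\<^sup>-\<^sup>1\<close>.\<close>
  have "\<forall>\<^sub>F e in at_right 0. e *\<^sub>R inv (\<lambda>y. e *\<^sub>R (y - orth_proj M y) + G y) (x - P x) = x"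
    using bij eventually_at_right_less[of "0::real"]
  proof eventually_elim
    case (elim e)
    have "e *\<^sub>R ((1/e) *\<^sub>R x - P ((1/e) *\<^sub>R x)) + G ((1/e) *\<^sub>R x) = x - P x"
      using elim(2) \<open>G x = 0\<close> linear_scale[OF linear_G] linear_scale[OF linear_P]
      by (simp add: scaleR_diff_right)
    then have "inv (\<lambda>y. e *\<^sub>R (y - P y) + G y) (x - P x) = (1/e) *\<^sub>R x"
      using inv_f_f[OF bij_is_inj[OF elim(1)[unfolded orth_proj_eq_P]], of "(1/e) *\<^sub>R x"] by simp
    then show ?case using elim(2) by (simp add: orth_proj_eq_P)
  qed
  then have "x = 0" using lim by (rule tendsto_const_at_right_0)
  then show False using \<open>x \<noteq> 0\<close> by blast
qed

end

section \<open>Controllability\<close>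

lemma approx_controllable_if_finite_approx_controllable:
  "finite_approx_controllable S B T M \<Longrightarrow> approx_controllable S B T"
  unfolding finite_approx_controllable_def approx_controllable_def by blast

context control_system
begin

lemma positive_operator_gramian: "positive_operator (gramian S B T)"
  unfolding positive_operator_def using bounded_linear_gramian gramian_symmetric gramian_nonneg by blast

lemma gramian_positive_if_approx_controllable:
  assumes "approx_controllable S B T" and "x \<noteq> 0"
  shows "gramian S B T x \<bullet> x > 0"
proof (rule ccontr)
  assume "\<not> gramian S B T x \<bullet> x > 0"
  then have "gramian S B T x \<bullet> x = 0" using gramian_nonneg[of x] by simp
  then have control_0: "\<And>s. s \<in> {0..T} \<Longrightarrow> gram_control x s = 0" by (rule gram_control_eq_0)
  have "\<exists>u\<in>L2_controls T. norm (mild_solution S B 0 u T - x) < norm x"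
    using assms unfolding approx_controllable_def by simp
  then obtain u where u: "norm (mild_solution S B 0 u T - x) < norm x" by blast
  define y where "y = mild_solution S B 0 u T"
  have "y \<bullet> x = 0"
  proof (cases "(\<lambda>s. S (T - s) (B (u s))) integrable_on {0..T}")
    case True
    then have "y \<bullet> x = integral {0..T} (\<lambda>s. u s \<bullet> gram_control x s)"
      unfolding y_def mild_solution_def by (simp add: integral_inner_gram_control)
    also have "\<dots> = integral {0..T} (\<lambda>s. 0)" by (rule integral_cong) (simp add: control_0)
    finally show ?thesis by simp
  qed (simp add: y_def mild_solution_def not_integrable_integral)
  then have "(norm (y - x))\<^sup>2 = (norm y)\<^sup>2 + (norm x)\<^sup>2"
    by (simp add: power2_norm_eq_inner inner_diff_left inner_diff_right inner_commute)
  then have "norm x \<le> norm (y - x)" by (simp add: power2_le_imp_le)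
  then show False using u by (simp add: y_def)
qed

lemma finite_approx_controllable_if_projected_regularization_conditions:
  assumes "finite_orthonormal_basis E M"
    and bij: "\<forall>\<^sub>F e in at_right 0. bij (\<lambda>y. e *\<^sub>R (y - orth_proj M y) + gramian S B T y)"
    and lim: "\<And>x. ((\<lambda>e. e *\<^sub>R inv (\<lambda>y. e *\<^sub>R (y - orth_proj M y) + gramian S B T y) x) \<longlongrightarrow> 0)
      (at_right 0)"
  shows "finite_approx_controllable S B T M"
  unfolding finite_approx_controllable_def
proof (intro allI impI)
  interpret finite_orthonormal_basis E M by fact
  fix y0 yf :: 'x and \<epsilon> :: real assume "\<epsilon> > 0"
  define h where "h = yf - S T y0"
  let ?K = "\<lambda>e y. e *\<^sub>R (y - P y) + gramian S B T y"
  have "\<forall>\<^sub>F e in at_right 0. e > 0 \<and> bij (?K e) \<and> norm (e *\<^sub>R inv (?K e) h) < \<epsilon>"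
    using eventually_at_right_less[of "0::real"] bij tendstoD[OF lim \<open>\<epsilon> > 0\<close>, of h]
    by eventually_elim (simp add: orth_proj_eq_P)
  then obtain e where e: "e > 0" "bij (?K e)" "norm (e *\<^sub>R inv (?K e) h) < \<epsilon>"
    using eventually_happens trivial_limit_at_right_real by blast
  define x where "x = inv (?K e) h"
  have "e *\<^sub>R (x - P x) + gramian S B T x = h"
    unfolding x_def using surj_f_inv_f[OF bij_is_surj[OF e(2)], of h] by simp
  then have miss: "mild_solution S B y0 (gram_control x) T - yf = - (e *\<^sub>R (x - P x))"
    unfolding mild_solution_gram_control h_def by (simp add: algebra_simps)
  have "norm (mild_solution S B y0 (gram_control x) T - yf) \<le> e * norm x"
    unfolding miss using norm_diff_P_le[of x] e(1) by (simp add: mult_left_mono)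
  also have "\<dots> < \<epsilon>" using e(1,3) by (simp add: x_def)
  finally have "norm (mild_solution S B y0 (gram_control x) T - yf) < \<epsilon>" .
  moreover have "P (mild_solution S B y0 (gram_control x) T) = P yf"
  proof -
    have "mild_solution S B y0 (gram_control x) T = yf - e *\<^sub>R (x - P x)"
      using miss by (simp add: algebra_simps)
    then show ?thesis
      by (simp add: linear_diff[OF linear_P] linear_scale[OF linear_P] P_idem)
  qed
  moreover have "gram_control x \<in> L2_controls T"
    by (rule continuous_in_L2_controls[OF continuous_on_gram_control T_pos])
  ultimately show "\<exists>u\<in>L2_controls T. norm (mild_solution S B y0 u T - yf) < \<epsilon>
      \<and> orth_proj M (mild_solution S B y0 u T) = orth_proj M yf"
    unfolding orth_proj_eq_P by blast
qed

end

theorem theorem4: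
  fixes S :: "real \<Rightarrow> 'x::{real_inner,complete_space} \<Rightarrow>\<^sub>L 'x"
    and D :: "'x set" and A :: "'x \<Rightarrow> 'x"
    and B :: "'u::{real_inner,complete_space} \<Rightarrow>\<^sub>L 'x"
    and T :: real and M :: "'x set"
  assumes "C0_semigroup S"
    and "generator S D A"
    and "T > 0"
    and "subspace M" and "\<exists>F. finite F \<and> M = span F"
  shows "(approx_controllable S B T \<longleftrightarrow>
            (\<forall>x. x \<noteq> 0 \<longrightarrow> gramian S B T x \<bullet> x > 0))
       \<and> ((\<forall>x. x \<noteq> 0 \<longrightarrow> gramian S B T x \<bullet> x > 0) \<longleftrightarrow>
            (\<forall>x. ((\<lambda>e. e *\<^sub>R inv (\<lambda>y. e *\<^sub>R y + gramian S B T y) x) \<longlongrightarrow> 0) (at_right 0)))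
       \<and> ((\<forall>x. ((\<lambda>e. e *\<^sub>R inv (\<lambda>y. e *\<^sub>R y + gramian S B T y) x) \<longlongrightarrow> 0) (at_right 0)) \<longleftrightarrow>
            ((\<forall>\<^sub>F e in at_right 0. bij (\<lambda>y. e *\<^sub>R (y - orth_proj M y) + gramian S B T y)) \<and>
             (\<forall>x. ((\<lambda>e. e *\<^sub>R inv (\<lambda>y. e *\<^sub>R (y - orth_proj M y) + gramian S B T y) x) \<longlongrightarrow> 0)
                    (at_right 0))))
       \<and> (((\<forall>\<^sub>F e in at_right 0. bij (\<lambda>y. e *\<^sub>R (y - orth_proj M y) + gramian S B T y)) \<and>
             (\<forall>x. ((\<lambda>e. e *\<^sub>R inv (\<lambda>y. e *\<^sub>R (y - orth_proj M y) + gramian S B T y) x) \<longlongrightarrow> 0)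
                    (at_right 0))) \<longleftrightarrow>
            finite_approx_controllable S B T M)"
proof -
  interpret control_system S B T using assms(1,3) by unfold_locales
  obtain F where "finite F" "M = span F" using assms(5) by blast
  then obtain E where "finite_orthonormal_basis E M"
    using finite_span_orthonormal_basis unfolding finite_orthonormal_basis_def by metis
  then interpret \<Gamma>: positive_operator_projection "gramian S B T" E M
    using positive_operator_gramian by (simp add: positive_operator_projection_def)
  show ?thesis
    using gramian_positive_if_approx_controllable
      \<Gamma>.scaled_regularized_inverse_tendsto_0_if_positive
      \<Gamma>.positive_if_scaled_regularized_inverse_tendsto_0
      \<Gamma>.projected_regularization_conditions_if_positive
      \<Gamma>.positive_if_projected_regularization_conditions
      finite_approx_controllable_if_projected_regularization_conditions[OF \<Gamma>.finite_orthonormal_basis_axioms]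
      approx_controllable_if_finite_approx_controllable
    by meson
qed

end
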